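(* Let $F$ be a field of characteristic $0$, $d\ge1$, $\lambda\vdash k$ a partition with $n$ parts and $\sigma\in S_n$. If the largest part of $\sigma(\lambda)$ is at least $2d$, then $\mathrm{tr}(\sigma\,ST(\lambda)(x_1,\dots,x_k))=0$ for all $x_1,\dots,x_k\in M_d(F)$.
   Context: $ST(\lambda)$: for $\lambda=(h_1,\dots,h_n)\vdash k$, set $X_j:=x_{h_1+\dots+h_{j-1}+1}\cdots x_{h_1+\dots+h_j}$ and $ST(\lambda)(x_1,\dots,x_k):=\sum_{\tau\in S_k}\epsilon_\tau (X_1\otimes\cdots\otimes X_n)(x_{\tau(1)},\dots,x_{\tau(k)})$, evaluated in $M_d(F)^{\otimes n}=\mathrm{End}((F^d)^{\otimes n})$. $S_n$ acts on $(F^d)^{\otimes n}$ by permuting tensor factors. For $\sigma\in S_n$ with cycle decomposition $c_1\cdots c_l$ (fixed points included as $1$-cycles), $\sigma(\lambda)$ is the partition $(\sum_{i\in c_1}h_i,\dots,\sum_{i\in c_l}h_i)$ arranged non-increasingly. *)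

theory Defs
  imports "Jordan_Normal_Form.Matrix" "HOL-Combinatorics.Permutations" "HOL-Library.FuncSet"
    "HOL-Library.Multiset"
begin

text \<open>Elements of the tensor power (F^d)^{\<otimes>n} are indexed (w.r.t. the standard basis
 e_{i_0} \<otimes> ... \<otimes> e_{i_{n-1}}) by index functions i : {0..<n} \<rightarrow> {0..<d}.
 Endomorphisms of (F^d)^{\<otimes>n} are represented by their matrices, i.e. functions of two index
 functions.  All indices are 0-based.\<close>

definition tidx :: "nat \<Rightarrow> nat \<Rightarrow> (nat \<Rightarrow> nat) set" where
  "tidx d n = {0..<n} \<rightarrow>\<^sub>E {0..<d}"

type_synonym 'a tmat = "(nat \<Rightarrow> nat) \<Rightarrow> (nat \<Rightarrow> nat) \<Rightarrow> 'a"

definition tmult :: "nat \<Rightarrow> nat \<Rightarrow> 'a::comm_ring_1 tmat \<Rightarrow> 'a tmat \<Rightarrow> 'a tmat" where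
  "tmult d n A B = (\<lambda>i i''. \<Sum>i'\<in>tidx d n. A i i' * B i' i'')"

definition ttrace :: "nat \<Rightarrow> nat \<Rightarrow> 'a::comm_ring_1 tmat \<Rightarrow> 'a" where
  "ttrace d n A = (\<Sum>i\<in>tidx d n. A i i)"

definition tensor_op :: "nat \<Rightarrow> (nat \<Rightarrow> 'a::comm_ring_1 mat) \<Rightarrow> 'a tmat" where
  "tensor_op n As = (\<lambda>i i'. \<Prod>j<n. As j $$ (i j, i' j))"

text \<open>Matrix of the action of \<sigma> \<in> S_n by permuting tensor factors:
 v_0 \<otimes> ... \<otimes> v_{n-1} \<mapsto> v_{\<sigma>^{-1}(0)} \<otimes> ... \<otimes> v_{\<sigma>^{-1}(n-1)},
 i.e. e_{i'} \<mapsto> e_{i' \<circ> \<sigma>^{-1}}.\<close>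
definition perm_op :: "nat \<Rightarrow> (nat \<Rightarrow> nat) \<Rightarrow> 'a::comm_ring_1 tmat" where
  "perm_op n \<sigma> = (\<lambda>i i'. if (\<forall>j<n. i j = i' (inv_into UNIV \<sigma> j)) then 1 else 0)"

definition mat_prod_list :: "nat \<Rightarrow> 'a::comm_ring_1 mat list \<Rightarrow> 'a mat" where
  "mat_prod_list d As = foldr (*) As (1\<^sub>m d)"

text \<open>Partition \<lambda> = (h_1,...,h_n) given as a list h (0-based).
 X_j (0-based) = x_{off_j} \<cdots> x_{off_j + h_j - 1}, off_j = h_0+...+h_{j-1}.\<close>
definition block_start :: "nat list \<Rightarrow> nat \<Rightarrow> nat" where
  "block_start h j = sum_list (take j h)"

definition block_prod :: "nat \<Rightarrow> nat list \<Rightarrow> (nat \<Rightarrow> 'a::comm_ring_1 mat) \<Rightarrow> nat \<Rightarrow> 'a mat" where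
  "block_prod d h x j = mat_prod_list d (map (\<lambda>t. x (block_start h j + t)) [0..<h ! j])"

definition ST :: "nat \<Rightarrow> nat list \<Rightarrow> (nat \<Rightarrow> 'a::comm_ring_1 mat) \<Rightarrow> 'a tmat" where
  "ST d h x = (\<lambda>i i'. \<Sum>\<tau> | \<tau> permutes {0..<sum_list h}.
      of_int (sign \<tau>) * tensor_op (length h) (block_prod d h (\<lambda>m. x (\<tau> m))) i i')"

definition is_partition :: "nat list \<Rightarrow> nat \<Rightarrow> bool" where
  "is_partition h k \<longleftrightarrow> sum_list h = k \<and> (\<forall>p\<in>set h. p > 0) \<and> sorted (rev h)"

text \<open>Cycle (orbit) of \<sigma> through i; cycles of \<sigma> on {0..<n}, fixed points included.\<close>
definition cycle_of :: "(nat \<Rightarrow> nat) \<Rightarrow> nat \<Rightarrow> nat set" where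
  "cycle_of \<sigma> i = {(\<sigma> ^^ m) i | m. True}"

definition perm_cycles :: "nat \<Rightarrow> (nat \<Rightarrow> nat) \<Rightarrow> nat set set" where
  "perm_cycles n \<sigma> = cycle_of \<sigma> ` {0..<n}"

definition sigma_partition :: "(nat \<Rightarrow> nat) \<Rightarrow> nat list \<Rightarrow> nat multiset" where
  "sigma_partition \<sigma> h = image_mset (\<lambda>c. \<Sum>i\<in>c. h ! i) (mset_set (perm_cycles (length h) \<sigma>))"

end

theory Submission
  imports Defs "HOL-Combinatorics.Cycles"
begin

text \<open>Expanding the trace of \<open>\<sigma> \<circ> ST(\<lambda>)\<close> in the tensor basis, the factors belonging to one
  cycle \<open>c\<close> of \<open>\<sigma>\<close> contribute the trace of the product of their blocks \<open>X\<^sub>j\<close>, i.e. the trace of a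
  word in the variables of these blocks; the remaining factors do not involve those variables.
  Taking \<open>c\<close> with \<open>\<Sum>\<^sub>j\<^sub>\<in>\<^sub>c h\<^sub>j \<ge> 2d\<close> and summing first over the permutations of its variables,
  the alternating sum becomes a combination of traces of standard polynomials of degree at
  least \<open>2d\<close>, which vanish by the Amitsur--Levitzki theorem.

  The Amitsur--Levitzki theorem is proved following Rosset: for \<open>Z = \<Sum>\<^sub>a z\<^sub>a e\<^sub>a\<close> with
  anticommuting \<open>e\<^sub>a\<close>, the matrix \<open>Z\<^sup>2\<close> has entries in a commutative ring of characteristic 0 and
  all its powers have trace zero (a trace of a word is invariant under rotation, the sign of an
  even-length word is not), hence \<open>Z\<^sup>2\<close> is nilpotent; the coefficient of \<open>e\<^sub>1 \<cdots> e\<^sub>2\<^sub>d\<close> in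
  \<open>Z\<^sup>2\<^sup>d = 0\<close> is the standard polynomial.\<close>

lemma map_permutation_of_list_zip:
  assumes "distinct u" "length u = length w"
  shows "map (permutation_of_list (zip u w)) u = w"
proof (rule nth_equalityI)
  fix i assume "i < length (map (permutation_of_list (zip u w)) u)"
  then have "(u ! i, w ! i) \<in> set (zip u w)"
    using assms(2) by (auto simp: in_set_zip)
  then show "map (permutation_of_list (zip u w)) u ! i = w ! i"
    using \<open>i < _\<close> assms by (simp add: permutation_of_list_unique')
qed (use assms in simp)

lemma permutation_of_list_zip_permutes:
  assumes "distinct u" "length u = length w" "set w = set u"
  shows "permutation_of_list (zip u w) permutes set u"
  using assms by (intro permutation_of_list_permutes list_permutesI) auto

lemma permutation_of_list_zip_unique:
  assumes "p permutes set u" "distinct u"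
  shows "permutation_of_list (zip u (map p u)) = p"
proof
  fix x show "permutation_of_list (zip u (map p u)) x = p x"
  proof (cases "x \<in> set u")
    case True
    then have "(x, p x) \<in> set (zip u (map p u))"
      by (auto simp: in_set_zip in_set_conv_nth)
    then show ?thesis using assms(2) by (simp add: permutation_of_list_unique')
  next
    case False
    then show ?thesis
      using assms(1) by (simp add: permutation_of_list_id permutes_not_in)
  qed
qed

definition list_sign :: "'a::linorder list \<Rightarrow> int" where
  "list_sign w = sign (permutation_of_list (zip (sorted_list_of_set (set w)) w))"

lemma list_sign_nonzero: "list_sign w \<noteq> 0"
  by (simp add: list_sign_def)

lemma list_sign_map:
  assumes "distinct w" "\<rho> permutes set w"
  shows "list_sign (map \<rho> w) = sign \<rho> * list_sign w"
proof -
  let ?s = "sorted_list_of_set (set w)"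
  have s: "distinct ?s" "set ?s = set w" "length ?s = length w"
    using assms(1) by (auto simp: distinct_card)
  define \<pi> where "\<pi> = permutation_of_list (zip ?s w)"
  have \<pi>: "\<pi> permutes set w" "map \<pi> ?s = w"
    unfolding \<pi>_def using permutation_of_list_zip_permutes[of ?s w] map_permutation_of_list_zip[of ?s w] s
    by auto
  have "set (map \<rho> w) = set w" using assms(2) by (simp add: permutes_image)
  moreover have "permutation_of_list (zip ?s (map \<rho> w)) = \<rho> \<circ> \<pi>"
    using permutation_of_list_zip_unique[of "\<rho> \<circ> \<pi>" ?s] \<pi> assms(2) s
    by (simp add: permutes_compose flip: map_map)
  ultimately have "list_sign (map \<rho> w) = sign (\<rho> \<circ> \<pi>)" by (simp add: list_sign_def)
  also have "\<dots> = sign \<rho> * sign \<pi>"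
    using \<pi>(1) assms(2) by (intro sign_compose) (auto simp: permutation_permutes)
  finally show ?thesis unfolding list_sign_def \<pi>_def .
qed

lemma list_sign_sorted: "finite S \<Longrightarrow> list_sign (sorted_list_of_set S) = 1"
  using permutation_of_list_zip_unique[of id "sorted_list_of_set S"]
  by (simp add: list_sign_def permutes_id)

definition shuffle_sign :: "'a::linorder set \<Rightarrow> 'a set \<Rightarrow> int" where
  "shuffle_sign S T = list_sign (sorted_list_of_set S @ sorted_list_of_set T)"

lemma shuffle_sign_empty_left: "finite U \<Longrightarrow> shuffle_sign {} U = 1"
  by (simp add: shuffle_sign_def list_sign_sorted)

lemma list_sign_append:
  assumes "distinct u" "distinct v" "set u \<inter> set v = {}"
  shows "list_sign (u @ v) = list_sign u * list_sign v * shuffle_sign (set u) (set v)"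
proof -
  let ?su = "sorted_list_of_set (set u)" and ?sv = "sorted_list_of_set (set v)"
  have su: "distinct ?su" "set ?su = set u" "length ?su = length u"
    using assms(1) by (auto simp: distinct_card)
  have sv: "distinct ?sv" "set ?sv = set v" "length ?sv = length v"
    using assms(2) by (auto simp: distinct_card)
  define p1 where "p1 = permutation_of_list (zip ?su u)"
  define p2 where "p2 = permutation_of_list (zip ?sv v)"
  have p1: "p1 permutes set u" "map p1 ?su = u"
    unfolding p1_def using permutation_of_list_zip_permutes[of ?su u] map_permutation_of_list_zip[of ?su u] su
    by auto
  have p2: "p2 permutes set v" "map p2 ?sv = v"
    unfolding p2_def using permutation_of_list_zip_permutes[of ?sv v] map_permutation_of_list_zip[of ?sv v] sv
    by auto
  have "map p2 ?su = ?su" "map p1 v = v"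
    using p1(1) p2(1) su sv assms(3) by (auto intro!: map_idI permutes_not_in)
  then have "map (p1 \<circ> p2) (?su @ ?sv) = u @ v"
    using p1(2) p2(2) by (simp flip: map_map)
  moreover have "p1 \<circ> p2 permutes set (?su @ ?sv)"
    using p1(1) p2(1) su sv by (auto intro: permutes_compose permutes_subset)
  moreover have "distinct (?su @ ?sv)" using su sv assms(3) by auto
  ultimately have "list_sign (u @ v) = sign (p1 \<circ> p2) * list_sign (?su @ ?sv)"
    using list_sign_map by metis
  also have "sign (p1 \<circ> p2) = sign p1 * sign p2"
    using p1(1) p2(1) by (intro sign_compose) (auto simp: permutation_permutes)
  finally show ?thesis
    unfolding list_sign_def shuffle_sign_def p1_def p2_def by simp
qed

lemma shuffle_sign_assoc:
  assumes "finite S" "finite T" "finite U" "S \<inter> T = {}" "S \<inter> U = {}" "T \<inter> U = {}"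
  shows "shuffle_sign S T * shuffle_sign (S \<union> T) U = shuffle_sign T U * shuffle_sign S (T \<union> U)"
proof -
  let ?S = "sorted_list_of_set S" and ?T = "sorted_list_of_set T" and ?U = "sorted_list_of_set U"
  have "list_sign ((?S @ ?T) @ ?U) = shuffle_sign S T * shuffle_sign (S \<union> T) U"
    using list_sign_append[of "?S @ ?T" ?U] assms
    by (simp add: list_sign_sorted shuffle_sign_def[of S T] Int_Un_distrib2)
  moreover have "list_sign (?S @ (?T @ ?U)) = shuffle_sign T U * shuffle_sign S (T \<union> U)"
    using list_sign_append[of ?S "?T @ ?U"] assms
    by (simp add: list_sign_sorted shuffle_sign_def[of T U] Int_Un_distrib)
  ultimately show ?thesis by simp
qed

lemma sign_cycle_of_list:
  "distinct cs \<Longrightarrow> sign (cycle_of_list cs) = (-1) ^ (length cs - 1)"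
proof (induction cs rule: cycle_of_list.induct)
  case (1 i j cs)
  have "sign (cycle_of_list (i # j # cs)) =
      sign (Transposition.transpose i j) * sign (cycle_of_list (j # cs))"
    by (simp add: sign_compose permutation_of_cycle permutation_swap_id)
  then show ?case using 1 by (simp add: sign_swap_id o_def)
qed simp_all

lemma list_sign_rotate1:
  assumes "distinct w"
  shows "list_sign (rotate1 w) = (-1) ^ (length w - 1) * list_sign w"
proof -
  have "rotate1 w = map (cycle_of_list w) w"
    using cyclic_rotation[OF assms, of 1] by simp
  then show ?thesis
    using list_sign_map[OF assms cycle_permutes[of w]] sign_cycle_of_list[OF assms] by simp
qed

lemma list_sign_rotate:
  assumes "distinct w"
  shows "list_sign (rotate m w) = (-1) ^ (m * (length w - 1)) * list_sign w"
proof (induction m)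
  case (Suc m)
  have "list_sign (rotate (Suc m) w) = (-1) ^ (length w - 1) * list_sign (rotate m w)"
    using list_sign_rotate1[of "rotate m w"] assms by simp
  then show ?case using Suc by (simp add: power_add)
qed simp

lemma shuffle_sign_commute:
  assumes "finite S" "finite T" "S \<inter> T = {}" "even (card S)"
  shows "shuffle_sign T S = shuffle_sign S T"
proof -
  let ?S = "sorted_list_of_set S" and ?T = "sorted_list_of_set T"
  have "?T @ ?S = rotate (length ?S) (?S @ ?T)"
    by (simp only: rotate_append)
  moreover have "distinct (?S @ ?T)" using assms by auto
  ultimately show ?thesis
    using list_sign_rotate[of "?S @ ?T" "length ?S"] assms
    by (simp add: shuffle_sign_def power_mult)
qed

section \<open>The even exterior algebra\<close>

definition even_supported :: "(nat set \<Rightarrow> 'a::zero) \<Rightarrow> bool" where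
  "even_supported f \<longleftrightarrow> (\<forall>U. f U \<noteq> 0 \<longrightarrow> finite U \<and> even (card U))"

text \<open>The even part of the exterior algebra over \<open>'a\<close> on generators \<open>e\<^sub>0, e\<^sub>1, \<dots>\<close>; an
  element is given by its coefficients, the coefficient at \<open>U\<close> being that of the product \<open>e\<^sub>U\<close>
  of the \<open>e\<^sub>u\<close>, \<open>u \<in> U\<close>, in increasing order, so that \<open>e\<^sub>S e\<^sub>T = shuffle_sign S T \<cdot> e\<^sub>S\<^sub>\<union>\<^sub>T\<close> for
  disjoint \<open>S\<close>, \<open>T\<close>.  Unlike the full exterior algebra, it is commutative.\<close>

typedef (overloaded) 'a even_ext = "{f :: nat set \<Rightarrow> 'a::comm_ring_1. even_supported f}"
  morphisms ext_coeff Abs_even_ext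
  by (rule exI[of _ "\<lambda>_. 0"]) (simp add: even_supported_def)

setup_lifting type_definition_even_ext

lemma even_ext_eqI: "(\<And>U. ext_coeff f U = ext_coeff g U) \<Longrightarrow> f = g"
  by (metis ext_coeff_inverse ext)

definition ext_mult :: "(nat set \<Rightarrow> 'a::comm_ring_1) \<Rightarrow> (nat set \<Rightarrow> 'a) \<Rightarrow> nat set \<Rightarrow> 'a" where
  "ext_mult f g U =
    (if finite U then \<Sum>S\<in>Pow U. of_int (shuffle_sign S (U - S)) * f S * g (U - S) else 0)"

lemma even_supported_ext_mult:
  assumes "even_supported f" "even_supported g"
  shows "even_supported (ext_mult f g)"
  unfolding even_supported_def
proof (intro allI impI)
  fix U assume nz: "ext_mult f g U \<noteq> 0"
  then have fin: "finite U" unfolding ext_mult_def by (auto split: if_splits)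
  then obtain S where S: "S \<subseteq> U" "of_int (shuffle_sign S (U - S)) * f S * g (U - S) \<noteq> 0"
    using nz unfolding ext_mult_def by (metis (no_types, lifting) PowD sum.neutral)
  then have "f S \<noteq> 0" "g (U - S) \<noteq> 0" by auto
  then have "even (card S)" "even (card (U - S))"
    using assms by (auto simp: even_supported_def)
  moreover have "card U = card S + card (U - S)"
    using S(1) fin by (metis card_Diff_subset finite_subset le_add_diff_inverse card_mono)
  ultimately show "finite U \<and> even (card U)" using fin by simp
qed

lemma ext_mult_one_left:
  assumes "even_supported f"
  shows "ext_mult (\<lambda>U. if U = {} then c else 0) f U = c * f U"
proof (cases "finite U")
  case True
  have "ext_mult (\<lambda>U. if U = {} then c else 0) f U =
      (\<Sum>S\<in>Pow U. if S = {} then of_int (shuffle_sign {} U) * c * f U else 0)"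
    unfolding ext_mult_def if_P[OF True] by (intro sum.cong) auto
  then show ?thesis using True by (simp add: shuffle_sign_empty_left)
next
  case False
  then have "f U = 0" using assms unfolding even_supported_def by blast
  then show ?thesis using False by (simp add: ext_mult_def)
qed

lemma ext_mult_commute:
  assumes "even_supported f" "even_supported g"
  shows "ext_mult f g U = ext_mult g f U"
proof (cases "finite U")
  case True
  have "(\<Sum>S\<in>Pow U. of_int (shuffle_sign S (U - S)) * g S * f (U - S)) =
        (\<Sum>S\<in>Pow U. of_int (shuffle_sign (U - S) (U - (U - S))) * g (U - S) * f (U - (U - S)))"
    by (rule sum.reindex_bij_witness[of _ "\<lambda>S. U - S" "\<lambda>S. U - S"]) (auto simp: Diff_Diff_Int Int_absorb1)
  also have "\<dots> = (\<Sum>S\<in>Pow U. of_int (shuffle_sign S (U - S)) * f S * g (U - S))"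
  proof (rule sum.cong)
    fix S assume S: "S \<in> Pow U"
    then have e: "U - (U - S) = S" by auto
    show "of_int (shuffle_sign (U - S) (U - (U - S))) * g (U - S) * f (U - (U - S)) =
          of_int (shuffle_sign S (U - S)) * f S * g (U - S)"
    proof (cases "f S = 0")
      case False
      then have "even (card S)" using assms unfolding even_supported_def by auto
      then have "shuffle_sign (U - S) S = shuffle_sign S (U - S)"
        using shuffle_sign_commute[of S "U - S"] True S by (auto intro: finite_subset)
      then show ?thesis unfolding e by (simp add: algebra_simps)
    qed (simp add: e)
  qed simp
  finally show ?thesis unfolding ext_mult_def using True by simp
qed (simp add: ext_mult_def)

lemma ext_mult_assoc: "ext_mult (ext_mult f g) h U = ext_mult f (ext_mult g h) U"
proof (cases "finite U")
  case True
  let ?lhs = "\<lambda>(A, S). of_int (shuffle_sign A (U - A)) * of_int (shuffle_sign S (A - S)) *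
      f S * g (A - S) * h (U - A)"
  let ?rhs = "\<lambda>(S, B). of_int (shuffle_sign S (U - S)) * of_int (shuffle_sign B (U - S - B)) *
      f S * g B * h (U - S - B)"
  have "ext_mult (ext_mult f g) h U = (\<Sum>A\<in>Pow U. \<Sum>S\<in>Pow A. ?lhs (A, S))"
    unfolding ext_mult_def[of "ext_mult f g"] if_P[OF True]
    by (intro sum.cong refl)
      (auto simp: ext_mult_def sum_distrib_left sum_distrib_right algebra_simps intro: finite_subset)
  also have "\<dots> = (\<Sum>p\<in>(SIGMA A:Pow U. Pow A). ?lhs p)"
    using True by (subst sum.Sigma) (auto intro: finite_subset)
  also have "\<dots> = (\<Sum>p\<in>(SIGMA S:Pow U. Pow (U - S)). ?rhs p)"
  proof (rule sum.reindex_bij_witness[of _ "\<lambda>(S, B). (S \<union> B, S)" "\<lambda>(A, S). (S, A - S)"])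
    fix p assume "p \<in> (SIGMA A:Pow U. Pow A)"
    then obtain A S where p: "p = (A, S)" "S \<subseteq> A" "A \<subseteq> U" by auto
    then have "finite S" "finite (A - S)" "finite (U - A)" using True by (auto intro: finite_subset)
    then have "shuffle_sign S (A - S) * shuffle_sign (S \<union> (A - S)) (U - A) =
        shuffle_sign (A - S) (U - A) * shuffle_sign S ((A - S) \<union> (U - A))"
      using p(2) by (intro shuffle_sign_assoc) auto
    moreover have sets: "U - S - (A - S) = U - A" "U - S = (A - S) \<union> (U - A)" "S \<union> (A - S) = A"
      using p by auto
    ultimately have "shuffle_sign A (U - A) * shuffle_sign S (A - S) =
        shuffle_sign S (U - S) * shuffle_sign (A - S) (U - A)"
      by (metis mult.commute)
    then show "?rhs ((\<lambda>(A, S). (S, A - S)) p) = ?lhs p"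
      unfolding p by (simp add: sets(1) flip: of_int_mult)
  qed auto
  also have "\<dots> = (\<Sum>S\<in>Pow U. \<Sum>B\<in>Pow (U - S). ?rhs (S, B))"
    using True by (subst sum.Sigma) auto
  also have "\<dots> = ext_mult f (ext_mult g h) U"
    unfolding ext_mult_def[of f] if_P[OF True]
    by (intro sum.cong refl) (auto simp: ext_mult_def sum_distrib_left algebra_simps)
  finally show ?thesis .
qed (simp add: ext_mult_def)

lemma ext_mult_add_left: "ext_mult (\<lambda>U. f U + g U) h U = ext_mult f h U + ext_mult g h U"
  unfolding ext_mult_def by (simp add: sum.distrib algebra_simps)

instantiation even_ext :: (comm_ring_1) comm_ring_1
begin

lift_definition zero_even_ext :: "'a even_ext" is "\<lambda>_. 0"
  by (simp add: even_supported_def)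
lift_definition one_even_ext :: "'a even_ext" is "\<lambda>U. if U = {} then 1 else 0"
  by (simp add: even_supported_def)
lift_definition plus_even_ext :: "'a even_ext \<Rightarrow> 'a even_ext \<Rightarrow> 'a even_ext" is "\<lambda>f g U. f U + g U"
  unfolding even_supported_def by (metis add.left_neutral add.right_neutral)
lift_definition uminus_even_ext :: "'a even_ext \<Rightarrow> 'a even_ext" is "\<lambda>f U. - f U"
  by (simp add: even_supported_def)
lift_definition minus_even_ext :: "'a even_ext \<Rightarrow> 'a even_ext \<Rightarrow> 'a even_ext" is "\<lambda>f g U. f U - g U"
  unfolding even_supported_def by (metis diff_self diff_zero)
lift_definition times_even_ext :: "'a even_ext \<Rightarrow> 'a even_ext \<Rightarrow> 'a even_ext" is ext_mult
  by (rule even_supported_ext_mult)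

instance
proof
  fix a b c :: "'a even_ext"
  show "a * b * c = a * (b * c)" by transfer (simp add: ext_mult_assoc fun_eq_iff)
  show "a * b = b * a" by transfer (simp add: ext_mult_commute fun_eq_iff)
  show "1 * a = a" by transfer (simp add: ext_mult_one_left fun_eq_iff)
  show "(a + b) * c = a * c + b * c" by transfer (simp add: ext_mult_add_left fun_eq_iff)
  show "a + b + c = a + (b + c)" by transfer (simp add: algebra_simps)
  show "a + b = b + a" by transfer (simp add: algebra_simps)
  show "0 + a = a" by transfer simp
  show "- a + a = 0" by transfer simp
  show "a - b = a + - b" by transfer simp
  show "(0::'a even_ext) \<noteq> 1" by transfer (metis zero_neq_one)
qed

end

lemma ext_coeff_mult: "ext_coeff (a * b) U = ext_mult (ext_coeff a) (ext_coeff b) U"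
  by transfer simp

lemma ext_coeff_zero [simp]: "ext_coeff 0 U = 0"
  by transfer simp

lemma ext_coeff_sum: "ext_coeff (sum F A) U = (\<Sum>i\<in>A. ext_coeff (F i) U)"
  by (induction A rule: infinite_finite_induct) (auto simp: plus_even_ext.rep_eq)

lift_definition ext_const :: "'a::comm_ring_1 \<Rightarrow> 'a even_ext" is "\<lambda>c U. if U = {} then c else 0"
  by (simp add: even_supported_def)

lemma ext_coeff_const_mult: "ext_coeff (ext_const c * a) U = c * ext_coeff a U"
  unfolding ext_coeff_mult ext_const.rep_eq
  by (rule ext_mult_one_left) (use ext_coeff in \<open>simp\<close>)

lemma ext_const_one: "ext_const 1 = 1"
  by transfer simp

lemma ext_const_zero: "ext_const 0 = 0"
  by transfer simp

lemma ext_const_add: "ext_const (a + b) = ext_const a + ext_const b"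
  by transfer auto

lemma ext_const_mult: "ext_const (a * b) = ext_const a * ext_const b"
  by (rule even_ext_eqI) (simp add: ext_coeff_const_mult ext_const.rep_eq)

lemma ext_const_sum: "ext_const (sum f A) = (\<Sum>i\<in>A. ext_const (f i))"
  by (induction A rule: infinite_finite_induct) (auto simp: ext_const_zero ext_const_add)

lemma of_nat_even_ext: "of_nat n = ext_const (of_nat n)"
  by (induction n) (auto simp: ext_const_zero ext_const_add ext_const_one add.commute)

lemma even_ext_torsion_free:
  fixes a :: "'a::{idom, ring_char_0} even_ext"
  assumes "of_nat n * a = 0" "n > 0"
  shows "a = 0"
proof (rule even_ext_eqI)
  fix U
  have "of_nat n * ext_coeff a U = 0"
    using arg_cong[OF assms(1), of "\<lambda>z. ext_coeff z U"]
    by (simp add: of_nat_even_ext ext_coeff_const_mult)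
  then show "ext_coeff a U = ext_coeff 0 U" using assms(2) by simp
qed

text \<open>The monomial \<open>e\<^sub>w\<^sub>1 \<cdots> e\<^sub>w\<^sub>m\<close> of a word \<open>w\<close> of even length.\<close>

lift_definition ext_monomial :: "nat list \<Rightarrow> 'a::comm_ring_1 even_ext" is
  "\<lambda>w U. if distinct w \<and> even (length w) \<and> U = set w then of_int (list_sign w) else 0"
  by (auto simp: even_supported_def distinct_card)

lemma ext_monomial_Nil: "ext_monomial [] = 1"
  by transfer (auto simp: list_sign_sorted[of "{}", simplified])

lemma ext_monomial_append:
  assumes "even (length u)" "even (length v)"
  shows "ext_monomial u * ext_monomial v = (ext_monomial (u @ v) :: 'a::comm_ring_1 even_ext)"
proof (rule even_ext_eqI)
  fix U
  let ?c = "distinct u \<and> distinct v \<and> set u \<inter> set v = {} \<and> U = set u \<union> set v"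
  let ?u = "ext_coeff (ext_monomial u :: 'a even_ext)" and ?v = "ext_coeff (ext_monomial v :: 'a even_ext)"
  let ?t = "\<lambda>S. of_int (shuffle_sign S (U - S)) * ?u S * ?v (U - S)"
  have "ext_coeff (ext_monomial u * ext_monomial v :: 'a even_ext) U = ext_mult ?u ?v U"
    by (simp add: ext_coeff_mult)
  also have "\<dots> = (if ?c then of_int (list_sign (u @ v)) else 0)"
  proof (cases ?c)
    case True
    then have "U - set u = set v" by auto
    then have t: "?t S = (if S = set u then
        of_int (shuffle_sign (set u) (set v) * list_sign u * list_sign v) else 0)" for S
      using True assms by (auto simp: ext_monomial.rep_eq)
    have fin: "finite U" using True by simp
    have "ext_mult ?u ?v U = (\<Sum>S\<in>Pow U. ?t S)"
      using fin by (simp add: ext_mult_def)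
    also have "\<dots> = (\<Sum>S\<in>Pow U. if S = set u then
        of_int (shuffle_sign (set u) (set v) * list_sign u * list_sign v) else 0)"
      by (rule sum.cong[OF refl], rule t)
    also have "\<dots> = of_int (shuffle_sign (set u) (set v) * list_sign u * list_sign v)"
      using True by simp
    also have "\<dots> = of_int (list_sign (u @ v))"
      using True list_sign_append[of u v] by (simp add: mult_ac)
    finally show ?thesis using True by simp
  next
    case False
    have "?t S = 0" if "S \<subseteq> U" for S
      using False that by (auto simp: ext_monomial.rep_eq)
    then have "ext_mult ?u ?v U = 0"
      by (simp add: ext_mult_def)
    then show ?thesis using False by (simp only: if_False)
  qed
  also have "\<dots> = ext_coeff (ext_monomial (u @ v)) U"
    using assms by (auto simp: ext_monomial.rep_eq)
  finally show "ext_coeff (ext_monomial u * ext_monomial v :: 'a even_ext) U =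
      ext_coeff (ext_monomial (u @ v) :: 'a even_ext) U" .
qed

lemma ext_const_monomial_mult:
  assumes "even (length w)"
  shows "ext_const x * ext_monomial [a, b] * (ext_const y * ext_monomial w) =
    ext_const (x * y) * ext_monomial (a # b # w)"
proof -
  have "ext_const x * ext_monomial [a, b] * (ext_const y * ext_monomial w) =
      ext_const x * ext_const y * (ext_monomial [a, b] * ext_monomial w)"
    by (simp only: ac_simps)
  also have "\<dots> = ext_const (x * y) * ext_monomial (a # b # w)"
    using assms by (simp add: ext_const_mult ext_monomial_append)
  finally show ?thesis .
qed

text \<open>A \<open>d \<times> d\<close> matrix is represented by its entry function; the values outside \<open>{..<d}\<close> are
  junk, which is why the identities below only hold for indices below \<open>d\<close>.\<close>

definition fmat_mult :: "nat \<Rightarrow> (nat \<Rightarrow> nat \<Rightarrow> 'a::comm_semiring_1) \<Rightarrow> (nat \<Rightarrow> nat \<Rightarrow> 'a) \<Rightarrow> nat \<Rightarrow> nat \<Rightarrow> 'a"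
  where "fmat_mult d A B = (\<lambda>p q. \<Sum>r<d. A p r * B r q)"

definition fmat_one :: "nat \<Rightarrow> nat \<Rightarrow> 'a::comm_semiring_1"
  where "fmat_one = (\<lambda>p q. if p = q then 1 else 0)"

primrec fmat_prod :: "nat \<Rightarrow> (nat \<Rightarrow> nat \<Rightarrow> 'a::comm_semiring_1) list \<Rightarrow> nat \<Rightarrow> nat \<Rightarrow> 'a" where
  "fmat_prod d [] = fmat_one"
| "fmat_prod d (A # As) = fmat_mult d A (fmat_prod d As)"

definition fmat_trace :: "nat \<Rightarrow> (nat \<Rightarrow> nat \<Rightarrow> 'a::comm_semiring_1) \<Rightarrow> 'a"
  where "fmat_trace d A = (\<Sum>p<d. A p p)"

definition fmat_power :: "nat \<Rightarrow> (nat \<Rightarrow> nat \<Rightarrow> 'a::comm_semiring_1) \<Rightarrow> nat \<Rightarrow> nat \<Rightarrow> nat \<Rightarrow> 'a"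
  where "fmat_power d N j = fmat_prod d (replicate j N)"

lemma fmat_mult_one_left:
  assumes "p < d"
  shows "fmat_mult d fmat_one B p q = B p q"
proof -
  have "fmat_mult d fmat_one B p q = (\<Sum>r<d. if p = r then B r q else 0)"
    unfolding fmat_mult_def fmat_one_def by (intro sum.cong) auto
  then show ?thesis using assms by simp
qed

lemma fmat_mult_one_right:
  assumes "q < d"
  shows "fmat_mult d B fmat_one p q = B p q"
proof -
  have "fmat_mult d B fmat_one p q = (\<Sum>r<d. if r = q then B p r else 0)"
    unfolding fmat_mult_def fmat_one_def by (intro sum.cong) auto
  then show ?thesis using assms by simp
qed

lemma fmat_mult_assoc: "fmat_mult d (fmat_mult d A B) C p q = fmat_mult d A (fmat_mult d B C) p q"
proof -
  have "fmat_mult d (fmat_mult d A B) C p q = (\<Sum>s<d. \<Sum>r<d. A p r * B r s * C s q)"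
    unfolding fmat_mult_def by (simp add: sum_distrib_right)
  also have "\<dots> = (\<Sum>r<d. \<Sum>s<d. A p r * B r s * C s q)"
    by (rule sum.swap)
  also have "\<dots> = fmat_mult d A (fmat_mult d B C) p q"
    unfolding fmat_mult_def by (simp add: sum_distrib_left mult.assoc)
  finally show ?thesis .
qed

lemma fmat_mult_cong:
  "(\<And>r. r < d \<Longrightarrow> A p r = A' p r) \<Longrightarrow> (\<And>r. r < d \<Longrightarrow> B r q = B' r q) \<Longrightarrow>
    fmat_mult d A B p q = fmat_mult d A' B' p q"
  unfolding fmat_mult_def by simp

lemma fmat_prod_append:
  "p < d \<Longrightarrow> fmat_prod d (As @ Bs) p q = fmat_mult d (fmat_prod d As) (fmat_prod d Bs) p q"
proof (induction As arbitrary: p)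
  case Nil
  then show ?case by (simp add: fmat_mult_one_left)
next
  case (Cons A As)
  have "fmat_prod d ((A # As) @ Bs) p q = fmat_mult d A (fmat_mult d (fmat_prod d As) (fmat_prod d Bs)) p q"
    by (simp, intro fmat_mult_cong) (simp_all add: Cons.IH)
  then show ?case by (simp add: fmat_mult_assoc)
qed

lemma fmat_prod_cong:
  assumes "list_all2 (\<lambda>A B. \<forall>p<d. \<forall>q<d. A p q = B p q) As Bs" "p < d" "q < d"
  shows "fmat_prod d As p q = fmat_prod d Bs p q"
  using assms
proof (induction As Bs arbitrary: p rule: list_all2_induct)
  case (Cons A As B Bs)
  then show ?case by (simp, intro fmat_mult_cong) simp_all
qed simp

lemma fmat_trace_mult_commute: "fmat_trace d (fmat_mult d A B) = fmat_trace d (fmat_mult d B A)"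
  unfolding fmat_trace_def fmat_mult_def by (subst sum.swap) (simp add: mult.commute)

lemma fmat_power_add:
  "p < d \<Longrightarrow> fmat_power d N (i + j) p q = fmat_mult d (fmat_power d N i) (fmat_power d N j) p q"
  by (simp add: fmat_power_def replicate_add fmat_prod_append)

definition word_fmat :: "nat \<Rightarrow> (nat \<Rightarrow> nat \<Rightarrow> nat \<Rightarrow> 'a::comm_semiring_1) \<Rightarrow> nat list \<Rightarrow> nat \<Rightarrow> nat \<Rightarrow> 'a"
  where "word_fmat d z w = fmat_prod d (map z w)"

lemma word_fmat_Cons: "word_fmat d z (a # w) = fmat_mult d (z a) (word_fmat d z w)"
  by (simp add: word_fmat_def)

lemma word_fmat_Cons2:
  "(\<Sum>r<d. fmat_mult d (z a) (z b) p r * word_fmat d z w r q) = word_fmat d z (a # b # w) p q"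
proof -
  have "word_fmat d z (a # b # w) p q = fmat_mult d (fmat_mult d (z a) (z b)) (word_fmat d z w) p q"
    by (simp add: word_fmat_Cons fmat_mult_assoc)
  then show ?thesis by (simp only: fmat_mult_def[of d "fmat_mult d (z a) (z b)"])
qed

lemma word_fmat_map: "word_fmat d z (map \<tau> w) = word_fmat d (z \<circ> \<tau>) w"
  by (simp add: word_fmat_def)

lemma fmat_trace_word_fmat_rotate1: "fmat_trace d (word_fmat d z (rotate1 w)) = fmat_trace d (word_fmat d z w)"
proof (cases w)
  case (Cons a u)
  have "fmat_trace d (word_fmat d z (u @ [a])) = fmat_trace d (fmat_mult d (word_fmat d z u) (z a))"
    unfolding fmat_trace_def word_fmat_def
    by (intro sum.cong refl, simp add: fmat_prod_append, intro fmat_mult_cong)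
      (simp_all add: fmat_mult_one_right)
  also have "\<dots> = fmat_trace d (fmat_mult d (z a) (word_fmat d z u))"
    by (rule fmat_trace_mult_commute)
  finally show ?thesis using Cons by (simp add: word_fmat_Cons)
qed simp

lemma fmat_prod_map_word_fmat:
  "p < d \<Longrightarrow> fmat_prod d (map (\<lambda>j. word_fmat d z (f j)) js) p q = word_fmat d z (concat (map f js)) p q"
proof (induction js arbitrary: p)
  case Nil
  then show ?case by (simp add: word_fmat_def)
next
  case (Cons j js)
  then show ?case
    by (simp add: word_fmat_def fmat_prod_append, intro fmat_mult_cong) (simp_all add: word_fmat_def)
qed

definition lists_of_len :: "'a set \<Rightarrow> nat \<Rightarrow> 'a list set"
  where "lists_of_len A m = {ws. set ws \<subseteq> A \<and> length ws = m}"

lemma finite_lists_of_len: "finite A \<Longrightarrow> finite (lists_of_len A m)"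
  unfolding lists_of_len_def by (rule finite_lists_length_eq)

lemma lists_of_len_0 [simp]: "lists_of_len A 0 = {[]}"
  by (auto simp: lists_of_len_def)

lemma sum_lists_of_len_Suc:
  assumes "finite A"
  shows "(\<Sum>ws\<in>lists_of_len A (Suc m). F ws) = (\<Sum>a\<in>A. \<Sum>ws\<in>lists_of_len A m. F (a # ws))"
proof -
  have inj: "inj_on (\<lambda>(ws, a). a # ws) (lists_of_len A m \<times> A)"
    by (auto simp: inj_on_def)
  have "(\<Sum>ws\<in>lists_of_len A (Suc m). F ws) = (\<Sum>(ws, a)\<in>lists_of_len A m \<times> A. F (a # ws))"
    unfolding lists_of_len_def lists_length_Suc_eq
    by (subst sum.reindex[OF inj[unfolded lists_of_len_def]]) (simp add: case_prod_unfold)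
  also have "\<dots> = (\<Sum>a\<in>A. \<Sum>ws\<in>lists_of_len A m. F (a # ws))"
    by (subst sum.cartesian_product[symmetric]) (rule sum.swap)
  finally show ?thesis .
qed

lemma sum_lists_of_len_rotate1:
  "(\<Sum>w\<in>lists_of_len A m. F (rotate1 w)) = (\<Sum>w\<in>lists_of_len A m. F w)"
proof -
  have "rotate1 ` lists_of_len A m = lists_of_len A m"
  proof
    show "lists_of_len A m \<subseteq> rotate1 ` lists_of_len A m"
    proof
      fix w assume "w \<in> lists_of_len A m"
      moreover have "w = rotate1 (rotate (length w - 1) w)"
        by (cases w) (simp_all flip: rotate_Suc)
      ultimately show "w \<in> rotate1 ` lists_of_len A m"
        by (auto simp: lists_of_len_def intro!: image_eqI[of _ _ "rotate (length w - 1) w"])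
    qed
  qed (auto simp: lists_of_len_def)
  then show ?thesis
    by (intro sum.reindex_cong[symmetric]) (auto intro: inj_on_subset[OF inj_rotate1])
qed

lemma sum_walks_eq_fmat_prod:
  assumes "Bs \<noteq> []" "p < d" "q < d"
  shows "(\<Sum>ws\<in>lists_of_len {..<d} (length Bs - 1).
      \<Prod>t<length Bs. (Bs ! t) ((ws @ [q]) ! t) ((p # ws) ! t)) = fmat_prod d (rev Bs) q p"
  using assms
proof (induction Bs arbitrary: p)
  case (Cons B Bs)
  show ?case
  proof (cases "Bs = []")
    case True
    then show ?thesis using Cons.prems by (simp add: fmat_mult_one_right)
  next
    case False
    then obtain m where m: "length Bs = Suc m" by (cases Bs) auto
    have "(\<Sum>ws\<in>lists_of_len {..<d} (Suc m).
        \<Prod>t<Suc (Suc m). ((B # Bs) ! t) ((ws @ [q]) ! t) ((p # ws) ! t)) =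
        (\<Sum>w<d. B w p * (\<Sum>ws\<in>lists_of_len {..<d} m.
          \<Prod>t<Suc m. (Bs ! t) ((ws @ [q]) ! t) ((w # ws) ! t)))"
      by (simp add: sum_lists_of_len_Suc prod.lessThan_Suc_shift sum_distrib_left
          del: prod.lessThan_Suc)
    then have "(\<Sum>ws\<in>lists_of_len {..<d} (length (B # Bs) - 1).
        \<Prod>t<length (B # Bs). ((B # Bs) ! t) ((ws @ [q]) ! t) ((p # ws) ! t)) =
        (\<Sum>w<d. B w p * (\<Sum>ws\<in>lists_of_len {..<d} (length Bs - 1).
          \<Prod>t<length Bs. (Bs ! t) ((ws @ [q]) ! t) ((w # ws) ! t)))"
      by (simp add: m)
    also have "\<dots> = (\<Sum>w<d. fmat_prod d (rev Bs) q w * B w p)"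
      using Cons.IH[OF False _ Cons.prems(3)] by (simp add: mult.commute)
    also have "\<dots> = fmat_mult d (fmat_prod d (rev Bs)) (fmat_prod d [B]) q p"
      unfolding fmat_mult_def using Cons.prems by (intro sum.cong) (auto simp: fmat_mult_one_right)
    also have "\<dots> = fmat_prod d (rev (B # Bs)) q p"
      using fmat_prod_append[of q d "rev Bs" "[B]" p] Cons.prems by simp
    finally show ?thesis .
  qed
qed simp

lemma sum_closed_walks_eq_fmat_trace:
  assumes "Bs \<noteq> []"
  shows "(\<Sum>vs\<in>lists_of_len {..<d} (length Bs).
      \<Prod>t<length Bs. (Bs ! t) (vs ! (Suc t mod length Bs)) (vs ! t)) = fmat_trace d (fmat_prod d (rev Bs))"
proof -
  obtain m where m: "length Bs = Suc m" using assms by (cases Bs) auto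
  have rotate: "vs ! (Suc t mod Suc m) = (tl vs @ [hd vs]) ! t"
    if "length vs = Suc m" "t < Suc m" for vs :: "nat list" and t
  proof (cases "Suc t < Suc m")
    case True
    then show ?thesis using that by (simp add: nth_append nth_tl)
  next
    case False
    then have "t = m" using that(2) by simp
    then show ?thesis using that by (cases vs) (simp_all add: nth_append)
  qed
  have "(\<Sum>vs\<in>lists_of_len {..<d} (length Bs).
      \<Prod>t<length Bs. (Bs ! t) (vs ! (Suc t mod length Bs)) (vs ! t)) =
      (\<Sum>vs\<in>lists_of_len {..<d} (Suc m). \<Prod>t<Suc m. (Bs ! t) ((tl vs @ [hd vs]) ! t) (vs ! t))"
    unfolding m by (intro sum.cong refl prod.cong) (auto simp: lists_of_len_def rotate)
  also have "\<dots> = (\<Sum>p<d. \<Sum>ws\<in>lists_of_len {..<d} m.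
      \<Prod>t<Suc m. (Bs ! t) ((ws @ [p]) ! t) ((p # ws) ! t))"
    by (simp add: sum_lists_of_len_Suc del: prod.lessThan_Suc)
  also have "\<dots> = fmat_trace d (fmat_prod d (rev Bs))"
    unfolding fmat_trace_def using sum_walks_eq_fmat_prod[OF assms] m by simp
  finally show ?thesis .
qed

lemma sum_PiE_map_eq_sum_lists_of_len:
  assumes "distinct S"
  shows "(\<Sum>i\<in>set S \<rightarrow>\<^sub>E A. H (map i S)) = (\<Sum>vs\<in>lists_of_len A (length S). H vs)"
proof (rule sum.reindex_bij_witness[of _ "\<lambda>vs. restrict (\<lambda>x. the (map_of (zip S vs) x)) (set S)"
      "\<lambda>i. map i S"])
  fix i assume i: "i \<in> set S \<rightarrow>\<^sub>E A"
  have "the (map_of (zip S (map i S)) x) = i x" if "x \<in> set S" for x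
    using that assms by (auto simp: in_set_conv_nth map_of_zip_nth)
  then show "restrict (\<lambda>x. the (map_of (zip S (map i S)) x)) (set S) = i"
    using i by (auto simp: PiE_iff extensional_def)
  show "map i S \<in> lists_of_len A (length S)"
    using i by (auto simp: lists_of_len_def PiE_iff)
next
  fix vs assume vs: "vs \<in> lists_of_len A (length S)"
  then have nth: "the (map_of (zip S vs) (S ! t)) = vs ! t" if "t < length S" for t
    using that assms by (simp add: lists_of_len_def map_of_zip_nth)
  with vs show "map (restrict (\<lambda>x. the (map_of (zip S vs) x)) (set S)) S = vs"
    by (intro nth_equalityI) (auto simp: lists_of_len_def)
  show "restrict (\<lambda>x. the (map_of (zip S vs) x)) (set S) \<in> set S \<rightarrow>\<^sub>E A"
    using vs nth by (auto simp: lists_of_len_def in_set_conv_nth) (metis nth_mem subsetD)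
qed simp

lemma sum_PiE_mult_split:
  fixes F G :: "('a \<Rightarrow> 'b) \<Rightarrow> 'c::comm_semiring_1"
  assumes "C \<subseteq> I"
    and F: "\<And>i i'. (\<forall>x\<in>C. i x = i' x) \<Longrightarrow> F i = F i'"
    and G: "\<And>i i'. (\<forall>x\<in>I - C. i x = i' x) \<Longrightarrow> G i = G i'"
  shows "(\<Sum>i\<in>I \<rightarrow>\<^sub>E K. F i * G i) = (\<Sum>i\<in>C \<rightarrow>\<^sub>E K. F i) * (\<Sum>i\<in>(I - C) \<rightarrow>\<^sub>E K. G i)"
proof -
  let ?glue = "\<lambda>(a, b). (\<lambda>x. if x \<in> C then a x else b x)"
  have "(\<Sum>i\<in>C \<rightarrow>\<^sub>E K. F i) * (\<Sum>i\<in>(I - C) \<rightarrow>\<^sub>E K. G i) =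
      (\<Sum>(a, b)\<in>(C \<rightarrow>\<^sub>E K) \<times> ((I - C) \<rightarrow>\<^sub>E K). F a * G b)"
    by (simp add: sum_product sum.cartesian_product)
  also have "\<dots> = (\<Sum>i\<in>I \<rightarrow>\<^sub>E K. F i * G i)"
  proof (rule sum.reindex_bij_witness[of _ "\<lambda>i. (restrict i C, restrict i (I - C))" ?glue])
    fix ab assume "ab \<in> (C \<rightarrow>\<^sub>E K) \<times> ((I - C) \<rightarrow>\<^sub>E K)"
    then obtain a b where ab: "ab = (a, b)" "a \<in> C \<rightarrow>\<^sub>E K" "b \<in> (I - C) \<rightarrow>\<^sub>E K" by auto
    then show "(restrict (?glue ab) C, restrict (?glue ab) (I - C)) = ab"
      by (auto simp: fun_eq_iff PiE_iff extensional_def)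
    show "?glue ab \<in> I \<rightarrow>\<^sub>E K"
      using ab assms(1) by (auto simp: PiE_iff extensional_def)
    show "F (?glue ab) * G (?glue ab) = (case ab of (a, b) \<Rightarrow> F a * G b)"
      unfolding ab(1) by (simp, intro arg_cong2[where f = "(*)"] F G) auto
  next
    fix i assume "i \<in> I \<rightarrow>\<^sub>E K"
    then show "?glue (restrict i C, restrict i (I - C)) = i"
      "(restrict i C, restrict i (I - C)) \<in> (C \<rightarrow>\<^sub>E K) \<times> ((I - C) \<rightarrow>\<^sub>E K)"
      using assms(1) by (auto simp: fun_eq_iff PiE_iff extensional_def)
  qed
  finally show ?thesis by simp
qed

lemma cycle_of_eq_set_support:
  assumes "permutation \<sigma>"
  shows "cycle_of \<sigma> j = set (support \<sigma> j)"
  unfolding cycle_of_def support_set[OF assms] by auto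

lemma card_cycle_of:
  assumes "permutation \<sigma>"
  shows "card (cycle_of \<sigma> j) = least_power \<sigma> j"
  unfolding cycle_of_eq_set_support[OF assms] distinct_card[OF cycle_of_permutation[OF assms]]
  by simp

lemma cycle_of_self: "j \<in> cycle_of \<sigma> j"
  unfolding cycle_of_def by (auto intro!: exI[of _ 0])

lemma cycle_of_subset:
  assumes "\<sigma> permutes A" "j \<in> A"
  shows "cycle_of \<sigma> j \<subseteq> A"
  unfolding cycle_of_def using permutes_in_image[OF permutes_funpow[OF assms(1)]] assms(2) by auto

lemma cycle_of_closed: "x \<in> cycle_of \<sigma> j \<Longrightarrow> \<sigma> x \<in> cycle_of \<sigma> j"
proof -
  assume "x \<in> cycle_of \<sigma> j"
  then obtain m where "x = (\<sigma> ^^ m) j" unfolding cycle_of_def by auto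
  then have "\<sigma> x = (\<sigma> ^^ Suc m) j" by simp
  then show ?thesis unfolding cycle_of_def by blast
qed

lemma cycle_of_sym:
  assumes "permutation \<sigma>" "x \<in> cycle_of \<sigma> y"
  shows "y \<in> cycle_of \<sigma> x"
proof -
  have "set (support \<sigma> x) \<inter> set (support \<sigma> y) \<noteq> {}"
    using assms cycle_of_self[of x \<sigma>] by (auto simp: cycle_of_eq_set_support)
  then show ?thesis
    using assms(1) disjoint_support'[OF assms(1), of y x]
    by (auto simp: cycle_of_eq_set_support)
qed

lemma cycle_of_compl_closed:
  assumes "\<sigma> permutes A" "finite A" "j \<in> A" "x \<in> A - cycle_of \<sigma> j"
  shows "\<sigma> x \<in> A - cycle_of \<sigma> j"
proof -
  have "\<sigma> ` cycle_of \<sigma> j = cycle_of \<sigma> j"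
  proof (rule endo_inj_surj)
    show "finite (cycle_of \<sigma> j)"
      using cycle_of_subset[OF assms(1,3)] assms(2) finite_subset by blast
    show "inj_on \<sigma> (cycle_of \<sigma> j)"
      using permutes_inj[OF assms(1)] by (rule inj_on_subset) simp
  qed (use cycle_of_closed in blast)
  then have "\<sigma> x \<notin> cycle_of \<sigma> j"
    using assms(4) permutes_inj[OF assms(1)] by (metis DiffD2 image_iff injD)
  then show ?thesis
    using assms(1,4) permutes_in_image by fastforce
qed

lemma support_nth_Suc_mod:
  assumes "permutation \<sigma>" "t < least_power \<sigma> j"
  shows "\<sigma> (support \<sigma> j ! t) = support \<sigma> j ! (Suc t mod least_power \<sigma> j)"
proof (cases "Suc t < least_power \<sigma> j")
  case False
  then have last: "Suc t = least_power \<sigma> j" using assms(2) by simp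
  have "\<sigma> (support \<sigma> j ! t) = (\<sigma> ^^ Suc t) j" using assms(2) by simp
  also have "\<dots> = j" unfolding last by (rule least_power_of_permutation(1)[OF assms(1)])
  also have "\<dots> = support \<sigma> j ! (Suc t mod least_power \<sigma> j)"
    using last least_power_of_permutation(2)[OF assms(1), of j] by simp
  finally show ?thesis .
qed (use assms in simp)

text \<open>For \<open>\<sigma>\<close> permuting \<open>C\<close>, the trace of \<open>\<sigma> \<circ> (\<Otimes>\<^sub>j\<^sub>\<in>\<^sub>C A\<^sub>j)\<close> on \<open>(F\<^sup>d)\<^sup>\<otimes>\<^sup>C\<close>, where \<open>\<sigma>\<close> acts by
  permuting the tensor factors.\<close>

definition perm_trace :: "nat \<Rightarrow> nat set \<Rightarrow> (nat \<Rightarrow> nat) \<Rightarrow> (nat \<Rightarrow> nat \<Rightarrow> nat \<Rightarrow> 'a::comm_semiring_1) \<Rightarrow> 'a"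
  where "perm_trace d C \<sigma> A = (\<Sum>i\<in>C \<rightarrow>\<^sub>E {..<d}. \<Prod>j\<in>C. A j (i (\<sigma> j)) (i j))"

lemma perm_trace_split:
  assumes "finite C" "C' \<subseteq> C"
    and "\<And>j. j \<in> C' \<Longrightarrow> \<sigma> j \<in> C'" "\<And>j. j \<in> C - C' \<Longrightarrow> \<sigma> j \<in> C - C'"
  shows "perm_trace d C \<sigma> A = perm_trace d C' \<sigma> A * perm_trace d (C - C') \<sigma> A"
proof -
  let ?P = "\<lambda>D i. \<Prod>j\<in>D. A j (i (\<sigma> j)) (i j)"
  have "perm_trace d C \<sigma> A = (\<Sum>i\<in>C \<rightarrow>\<^sub>E {..<d}. ?P C' i * ?P (C - C') i)"
    unfolding perm_trace_def prod.subset_diff[OF assms(2,1)] by (simp add: mult.commute)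
  also have "\<dots> = perm_trace d C' \<sigma> A * perm_trace d (C - C') \<sigma> A"
    unfolding perm_trace_def
  proof (rule sum_PiE_mult_split[OF assms(2)])
    show "?P C' i = ?P C' i'" if "\<forall>x\<in>C'. i x = i' x" for i i'
      using that assms(3) by (intro prod.cong) auto
    show "?P (C - C') i = ?P (C - C') i'" if "\<forall>x\<in>C - C'. i x = i' x" for i i'
      using that assms(4) by (intro prod.cong) auto
  qed
  finally show ?thesis .
qed

lemma perm_trace_cycle_of:
  assumes "permutation \<sigma>"
  shows "perm_trace d (cycle_of \<sigma> x) \<sigma> A = fmat_trace d (fmat_prod d (rev (map A (support \<sigma> x))))"
proof -
  define S where "S = support \<sigma> x"
  define r where "r = least_power \<sigma> x"
  define Bs where "Bs = map A S"
  have S: "distinct S" "set S = cycle_of \<sigma> x" "length S = r" "length Bs = r"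
    using cycle_of_permutation[OF assms]
    by (simp_all add: S_def r_def Bs_def cycle_of_eq_set_support[OF assms])
  have r: "r > 0" unfolding r_def using least_power_of_permutation(2)[OF assms] .
  have "(\<Prod>j\<in>cycle_of \<sigma> x. A j (i (\<sigma> j)) (i j)) =
      (\<Prod>t<r. (Bs ! t) (map i S ! (Suc t mod r)) (map i S ! t))" for i
  proof -
    have "bij_betw ((!) S) {..<r} (cycle_of \<sigma> x)"
      using S by (simp add: bij_betw_def inj_on_def nth_eq_iff_index_eq flip: atLeast0LessThan)
        (use nth_image[of r S] in simp)
    then have "(\<Prod>j\<in>cycle_of \<sigma> x. A j (i (\<sigma> j)) (i j)) = (\<Prod>t<r. A (S ! t) (i (\<sigma> (S ! t))) (i (S ! t)))"
      by (rule prod.reindex_bij_betw[symmetric])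
    also have "\<dots> = (\<Prod>t<r. (Bs ! t) (map i S ! (Suc t mod r)) (map i S ! t))"
    proof (rule prod.cong[OF refl])
      fix t assume "t \<in> {..<r}"
      then have t: "t < r" by simp
      have "\<sigma> (S ! t) = S ! (Suc t mod r)"
        unfolding S_def r_def by (rule support_nth_Suc_mod[OF assms t[unfolded r_def]])
      moreover have "Suc t mod r < r" using r by simp
      ultimately show "A (S ! t) (i (\<sigma> (S ! t))) (i (S ! t)) = (Bs ! t) (map i S ! (Suc t mod r)) (map i S ! t)"
        using t S by (simp add: Bs_def)
    qed
    finally show ?thesis .
  qed
  then have "perm_trace d (cycle_of \<sigma> x) \<sigma> A =
      (\<Sum>i\<in>set S \<rightarrow>\<^sub>E {..<d}. \<Prod>t<r. (Bs ! t) (map i S ! (Suc t mod r)) (map i S ! t))"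
    unfolding perm_trace_def S(2) by simp
  also have "\<dots> = (\<Sum>vs\<in>lists_of_len {..<d} r. \<Prod>t<r. (Bs ! t) (vs ! (Suc t mod r)) (vs ! t))"
    using sum_PiE_map_eq_sum_lists_of_len[OF S(1),
        where H = "\<lambda>vs. \<Prod>t<r. (Bs ! t) (vs ! (Suc t mod r)) (vs ! t)"] S(3) by (simp only:)
  also have "\<dots> = fmat_trace d (fmat_prod d (rev Bs))"
    using sum_closed_walks_eq_fmat_trace[of Bs d] S(4) r by auto
  finally show ?thesis unfolding Bs_def S_def .
qed

lemma perm_trace_isolate_cycle:
  assumes "\<sigma> permutes C" "finite C" "x \<in> C"
  shows "perm_trace d C \<sigma> A =
    perm_trace d (C - cycle_of \<sigma> x) \<sigma> A * fmat_trace d (fmat_prod d (rev (map A (support \<sigma> x))))"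
proof -
  have "perm_trace d C \<sigma> A = perm_trace d (cycle_of \<sigma> x) \<sigma> A * perm_trace d (C - cycle_of \<sigma> x) \<sigma> A"
    by (rule perm_trace_split[OF assms(2) cycle_of_subset[OF assms(1,3)]])
      (use cycle_of_closed cycle_of_compl_closed[OF assms] in blast)+
  moreover have "permutation \<sigma>" using assms permutation_permutes by blast
  ultimately show ?thesis by (simp add: perm_trace_cycle_of mult.commute)
qed

section \<open>Nilpotency from vanishing traces\<close>

text \<open>The antisymmetriser kills \<open>(F\<^sup>d)\<^sup>\<otimes>\<^sup>C\<close> as soon as \<open>card C > d\<close>.\<close>

lemma alternating_sum_perm_trace_eq_0:
  fixes A :: "nat \<Rightarrow> nat \<Rightarrow> nat \<Rightarrow> 'a::comm_ring_1"
  assumes "finite C" "d < card C" and two_torsion_free: "\<And>z::'a. z + z = 0 \<Longrightarrow> z = 0"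
  shows "(\<Sum>\<sigma> | \<sigma> permutes C. of_int (sign \<sigma>) * perm_trace d C \<sigma> A) = 0"
proof -
  have "(\<Sum>\<sigma> | \<sigma> permutes C. of_int (sign \<sigma>) * (\<Prod>j\<in>C. A j (i (\<sigma> j)) (i j))) = 0"
    if i: "i \<in> C \<rightarrow>\<^sub>E {..<d}" for i
  proof -
    let ?f = "\<lambda>\<sigma>. of_int (sign \<sigma>) * (\<Prod>j\<in>C. A j (i (\<sigma> j)) (i j))"
    have "\<not> inj_on i C"
    proof
      assume "inj_on i C"
      then have "card C \<le> card {..<d}"
        using i by (intro card_inj_on_le) (auto simp: PiE_iff)
      then show False using assms(2) by simp
    qed
    then obtain u v where uv: "u \<in> C" "v \<in> C" "u \<noteq> v" "i u = i v"
      unfolding inj_on_def by auto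
    define \<tau> where "\<tau> = Transposition.transpose u v"
    have \<tau>: "\<tau> permutes C" "sign \<tau> = -1" "\<And>x. i (\<tau> x) = i x"
      using uv by (auto simp: \<tau>_def permutes_swap_id sign_swap_id transpose_def)
    have "sum ?f {\<sigma>. \<sigma> permutes C} = sum (\<lambda>\<sigma>. ?f (\<tau> \<circ> \<sigma>)) {\<sigma>. \<sigma> permutes C}"
      by (rule setum_permutations_compose_left[OF \<tau>(1)])
    also have "\<dots> = sum (\<lambda>\<sigma>. - ?f \<sigma>) {\<sigma>. \<sigma> permutes C}"
    proof (rule sum.cong[OF refl])
      fix \<sigma> assume "\<sigma> \<in> {\<sigma>. \<sigma> permutes C}"
      then have "permutation \<tau>" "permutation \<sigma>"
        using \<tau>(1) assms(1) permutation_permutes by blast+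
      then have "sign (\<tau> \<circ> \<sigma>) = - sign \<sigma>"
        using \<tau>(2) by (simp add: sign_compose)
      then show "?f (\<tau> \<circ> \<sigma>) = - ?f \<sigma>" by (simp add: \<tau>(3))
    qed
    finally show ?thesis
      using two_torsion_free by (simp add: sum_negf eq_neg_iff_add_eq_0)
  qed
  then show ?thesis
    unfolding perm_trace_def sum_distrib_left by (subst sum.swap) simp
qed

lemma sign_full_cycle:
  assumes "\<sigma> permutes C" "finite C" "cycle_of \<sigma> j = C"
  shows "sign \<sigma> = (-1) ^ (card C - 1)"
proof -
  have perm: "permutation \<sigma>" using assms permutation_permutes by blast
  let ?S = "support \<sigma> j"
  have S: "distinct ?S" "set ?S = C"
    using cycle_of_permutation[OF perm] assms(3) cycle_of_eq_set_support[OF perm] by simp_all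
  have "\<sigma> = cycle_of_list ?S"
  proof
    fix x show "\<sigma> x = cycle_of_list ?S x"
    proof (cases "x \<in> set ?S")
      case True
      then show ?thesis by (rule cycle_restrict[OF perm])
    next
      case False
      then show ?thesis using assms(1) S by (simp add: permutes_not_in id_outside_supp)
    qed
  qed
  then show ?thesis
    using sign_cycle_of_list[OF S(1)] card_cycle_of[OF perm, of j] assms(3) by simp
qed

lemma ex_full_cycle:
  assumes "n > 0"
  shows "\<exists>\<sigma>. \<sigma> permutes {0..<n} \<and> cycle_of \<sigma> 0 = {0..<n}"
proof (intro exI conjI)
  let ?c = "cycle_of_list [0..<n]"
  show c: "?c permutes {0..<n}" using cycle_permutes[of "[0..<n]"] by simp
  show "cycle_of ?c 0 = {0..<n}"
  proof
    show "cycle_of ?c 0 \<subseteq> {0..<n}" using cycle_of_subset[OF c] assms by simp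
    show "{0..<n} \<subseteq> cycle_of ?c 0"
    proof
      fix m assume m: "m \<in> {0..<n}"
      have "map (?c ^^ m) [0..<n] = rotate m [0..<n]" by (rule cyclic_rotation) simp
      then have "(?c ^^ m) 0 = rotate m [0..<n] ! 0"
        using assms by (metis length_upt minus_nat.diff_0 nth_map nth_upt add_0)
      also have "\<dots> = m" using m assms by (simp add: nth_rotate)
      finally show "m \<in> cycle_of ?c 0" unfolding cycle_of_def by (metis (mono_tags) mem_Collect_eq)
    qed
  qed
qed

definition fmat_unit :: "nat \<Rightarrow> nat \<Rightarrow> nat \<Rightarrow> nat \<Rightarrow> 'a::comm_semiring_1"
  where "fmat_unit a b = (\<lambda>p q. if p = a \<and> q = b then 1 else 0)"

lemma fmat_trace_mult_unit:
  assumes "a < d" "b < d"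
  shows "fmat_trace d (fmat_prod d (Ns @ [fmat_unit a b])) = fmat_prod d Ns b a"
proof -
  have "fmat_trace d (fmat_prod d (Ns @ [fmat_unit a b])) =
      fmat_trace d (fmat_mult d (fmat_prod d Ns) (fmat_unit a b))"
    unfolding fmat_trace_def
    by (intro sum.cong refl, simp add: fmat_prod_append, intro fmat_mult_cong)
      (simp_all add: fmat_mult_one_right)
  also have "\<dots> = (\<Sum>p<d. \<Sum>r<d. fmat_prod d Ns p r * fmat_unit a b r p)"
    unfolding fmat_trace_def fmat_mult_def ..
  also have "\<dots> = (\<Sum>p<d. if p = b then fmat_prod d Ns p a else 0)"
    using assms(1) by (intro sum.cong refl) (simp add: fmat_unit_def if_distrib sum.delta' cong: if_cong)
  also have "\<dots> = fmat_prod d Ns b a"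
    using assms(2) by simp
  finally show ?thesis .
qed

text \<open>Marking one tensor factor with a matrix unit and filling the others with \<open>N\<close>, only the
  permutations that are a single cycle survive, and they all contribute an entry of \<open>N\<^sup>d\<close>.\<close>

lemma perm_trace_marked:
  fixes N :: "nat \<Rightarrow> nat \<Rightarrow> 'a::comm_ring_1"
  assumes \<sigma>: "\<sigma> permutes {0..<Suc d}"
    and traces: "\<And>j. 1 \<le> j \<Longrightarrow> fmat_trace d (fmat_power d N j) = 0"
    and "a < d" "b < d"
  shows "perm_trace d {0..<Suc d} \<sigma> (\<lambda>j. if j = 0 then fmat_unit a b else N) =
    (if cycle_of \<sigma> 0 = {0..<Suc d} then fmat_power d N d b a else 0)"
    (is "perm_trace d ?C \<sigma> ?A = _")
proof -
  have perm: "permutation \<sigma>" using \<sigma> permutation_permutes by blast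
  show ?thesis
  proof (cases "cycle_of \<sigma> 0 = ?C")
    case True
    then have lp: "least_power \<sigma> 0 = Suc d" using card_cycle_of[OF perm, of 0] by simp
    have "map ?A (support \<sigma> 0) ! t = (fmat_unit a b # replicate d N) ! t" if "t < Suc d" for t
    proof (cases "t = 0")
      case False
      then have "((\<sigma> ^^ t) 0 = (\<sigma> ^^ 0) 0) = False"
        using that lp nth_eq_iff_index_eq[OF cycle_of_permutation[OF perm, of 0], of t 0]
        by (simp del: upt_Suc)
      then show ?thesis using that lp False by (simp add: nth_Cons' del: upt_Suc)
    qed (use lp in \<open>simp del: upt_Suc\<close>)
    then have "map ?A (support \<sigma> 0) = fmat_unit a b # replicate d N"
      using lp by (intro nth_equalityI) simp_all
    then show ?thesis
      using True perm_trace_cycle_of[OF perm, where d = d and A = ?A and x = 0] fmat_trace_mult_unit[OF assms(3,4)]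
      by (simp add: fmat_power_def)
  next
    case False
    then have "cycle_of \<sigma> 0 \<subset> ?C" using cycle_of_subset[OF \<sigma>, of 0] by auto
    then obtain j0 where j0: "j0 \<in> ?C" "j0 \<notin> cycle_of \<sigma> 0" by blast
    then have "0 \<notin> cycle_of \<sigma> j0" using cycle_of_sym[OF perm] by blast
    then have "(\<sigma> ^^ m) j0 = 0 \<longleftrightarrow> False" for m
      unfolding cycle_of_def by (metis (mono_tags) mem_Collect_eq)
    then have "map ?A (support \<sigma> j0) = replicate (least_power \<sigma> j0) N"
      by (intro nth_equalityI) (simp_all del: neq0_conv)
    then have "fmat_trace d (fmat_prod d (rev (map ?A (support \<sigma> j0)))) = 0"
      using traces least_power_of_permutation(2)[OF perm] by (simp add: fmat_power_def Suc_le_eq)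
    then show ?thesis
      using False perm_trace_isolate_cycle[OF \<sigma> finite_atLeastLessThan j0(1), of d ?A] by simp
  qed
qed

lemma fmat_power_eq_0_if_traces_eq_0:
  fixes N :: "nat \<Rightarrow> nat \<Rightarrow> 'a::comm_ring_1"
  assumes torsion_free: "\<And>m (z::'a). 0 < m \<Longrightarrow> of_nat m * z = 0 \<Longrightarrow> z = 0"
    and traces: "\<And>j. 1 \<le> j \<Longrightarrow> fmat_trace d (fmat_power d N j) = 0"
    and "a < d" "b < d"
  shows "fmat_power d N d b a = 0"
proof -
  let ?C = "{0..<Suc d}" and ?X = "fmat_power d N d b a"
  let ?A = "\<lambda>j. if j = 0 then fmat_unit a b else N"
  define Full where "Full = {\<sigma>. \<sigma> permutes ?C \<and> cycle_of \<sigma> 0 = ?C}"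
  have fin: "finite {\<sigma>. \<sigma> permutes ?C}" by (rule finite_permutations) simp
  then have "finite Full" unfolding Full_def by (rule finite_subset[rotated]) auto
  moreover have "Full \<noteq> {}" using ex_full_cycle[of "Suc d"] by (auto simp: Full_def)
  ultimately have card: "0 < card Full" by (simp add: card_gt_0_iff)
  have two_torsion_free: "z = 0" if "z + z = 0" for z :: 'a
    using torsion_free[of 2 z] that by (simp add: mult_2)
  have "0 = (\<Sum>\<sigma> | \<sigma> permutes ?C. of_int (sign \<sigma>) * perm_trace d ?C \<sigma> ?A)"
    by (rule alternating_sum_perm_trace_eq_0[symmetric]) (simp_all add: two_torsion_free)
  also have "\<dots> = (\<Sum>\<sigma> | \<sigma> permutes ?C. if \<sigma> \<in> Full then (-1) ^ d * ?X else 0)"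
  proof (rule sum.cong[OF refl])
    fix \<sigma> assume "\<sigma> \<in> {\<sigma>. \<sigma> permutes ?C}"
    then have \<sigma>: "\<sigma> permutes ?C" by simp
    show "of_int (sign \<sigma>) * perm_trace d ?C \<sigma> ?A = (if \<sigma> \<in> Full then (-1) ^ d * ?X else 0)"
    proof (cases "\<sigma> \<in> Full")
      case True
      then have "sign \<sigma> = (-1) ^ d"
        using sign_full_cycle[OF \<sigma>, of 0] by (simp add: Full_def)
      then show ?thesis using True perm_trace_marked[OF \<sigma> traces assms(3,4)] by (simp add: Full_def)
    qed (use perm_trace_marked[OF \<sigma> traces assms(3,4)] \<sigma> in \<open>simp add: Full_def\<close>)
  qed
  also have "\<dots> = of_nat (card Full) * ((-1) ^ d * ?X)"
  proof -
    have "{\<sigma>. \<sigma> permutes ?C} \<inter> Full = Full" by (auto simp: Full_def)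
    then show ?thesis using sum.inter_restrict[OF fin, of "\<lambda>_. (-1) ^ d * ?X" Full] by simp
  qed
  finally have "of_nat (card Full) * ((-1) ^ d * ?X) = 0" by (rule sym)
  then have "(-1) ^ d * ?X = 0" by (rule torsion_free[OF card])
  then show ?thesis by (cases "even d") simp_all
qed

lemma fmat_power_eq_0_beyond:
  assumes "\<And>a b. a < d \<Longrightarrow> b < d \<Longrightarrow> fmat_power d N d b a = 0" "d \<le> j" "p < d" "q < d"
  shows "fmat_power d N j p q = 0"
  using fmat_power_add[of p d N "j - d" d q] assms by (simp add: fmat_mult_def)

section \<open>The Amitsur--Levitzki theorem\<close>

lemma alternating_sum_eq_0_by_cosets:
  fixes G :: "('b \<Rightarrow> 'b) \<Rightarrow> 'a::{idom, ring_char_0}"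
  assumes "finite S" "P \<subseteq> S"
    and cosets: "\<And>\<tau>. \<tau> permutes S \<Longrightarrow> (\<Sum>\<pi> | \<pi> permutes P. of_int (sign \<pi>) * G (\<tau> \<circ> \<pi>)) = 0"
  shows "(\<Sum>\<tau> | \<tau> permutes S. of_int (sign \<tau>) * G \<tau>) = 0"
proof -
  let ?L = "\<Sum>\<tau> | \<tau> permutes S. of_int (sign \<tau>) * G \<tau>"
  have "?L = (\<Sum>\<tau> | \<tau> permutes S. of_int (sign \<tau>) * (of_int (sign \<pi>) * G (\<tau> \<circ> \<pi>)))"
    if "\<pi> permutes P" for \<pi>
  proof -
    have \<pi>: "\<pi> permutes S" using that assms(2) permutes_subset by blast
    have "?L = (\<Sum>\<tau> | \<tau> permutes S. of_int (sign (\<tau> \<circ> \<pi>)) * G (\<tau> \<circ> \<pi>))"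
      by (rule sum_permutations_compose_right[OF \<pi>])
    also have "\<dots> = (\<Sum>\<tau> | \<tau> permutes S. of_int (sign \<tau>) * (of_int (sign \<pi>) * G (\<tau> \<circ> \<pi>)))"
    proof (rule sum.cong[OF refl])
      fix \<tau> assume "\<tau> \<in> {\<tau>. \<tau> permutes S}"
      then have "permutation \<tau>" "permutation \<pi>"
        using \<pi> assms(1) permutation_permutes by blast+
      then show "of_int (sign (\<tau> \<circ> \<pi>)) * G (\<tau> \<circ> \<pi>) = of_int (sign \<tau>) * (of_int (sign \<pi>) * G (\<tau> \<circ> \<pi>))"
        by (simp add: sign_compose)
    qed
    finally show ?thesis .
  qed
  note eq = this
  have "of_nat (card {\<pi>. \<pi> permutes P}) * ?L = (\<Sum>\<pi> | \<pi> permutes P. ?L)"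
    by simp
  also have "\<dots> =
      (\<Sum>\<pi> | \<pi> permutes P. \<Sum>\<tau> | \<tau> permutes S. of_int (sign \<tau>) * (of_int (sign \<pi>) * G (\<tau> \<circ> \<pi>)))"
    by (rule sum.cong[OF refl], rule eq) simp
  also have "\<dots> = (\<Sum>\<tau> | \<tau> permutes S. of_int (sign \<tau>) * (\<Sum>\<pi> | \<pi> permutes P. of_int (sign \<pi>) * G (\<tau> \<circ> \<pi>)))"
    by (subst sum.swap) (simp add: sum_distrib_left)
  also have "\<dots> = 0" using cosets by simp
  finally show ?thesis
    using card_permutations[OF refl finite_subset[OF assms(2,1)]] by simp
qed

lemma sum_distinct_words_eq_sum_permutes:
  assumes "distinct L"
  shows "(\<Sum>w\<in>lists_of_len (set L) (length L). if distinct w \<and> set w = set L then f w else 0) =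
    (\<Sum>\<pi> | \<pi> permutes set L. f (map \<pi> L))"
proof -
  let ?D = "{w \<in> lists_of_len (set L) (length L). distinct w \<and> set w = set L}"
  have "(\<Sum>w\<in>lists_of_len (set L) (length L). if distinct w \<and> set w = set L then f w else 0) =
      (\<Sum>w\<in>?D. f w)"
    using finite_lists_of_len[of "set L"] by (simp add: sum.inter_filter)
  also have "\<dots> = (\<Sum>\<pi> | \<pi> permutes set L. f (map \<pi> L))"
  proof (rule sum.reindex_bij_witness[of _ "\<lambda>\<pi>. map \<pi> L" "\<lambda>w. permutation_of_list (zip L w)"])
    fix w assume "w \<in> ?D"
    then have w: "distinct w" "set w = set L" "length L = length w"
      by (auto simp: lists_of_len_def)
    show "map (permutation_of_list (zip L w)) L = w"
      using map_permutation_of_list_zip[OF assms(1) w(3)] .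
    then show "f (map (permutation_of_list (zip L w)) L) = f w" by simp
    show "permutation_of_list (zip L w) \<in> {\<pi>. \<pi> permutes set L}"
      using permutation_of_list_zip_permutes[OF assms(1) w(3,2)] by simp
  next
    fix \<pi> assume "\<pi> \<in> {\<pi>. \<pi> permutes set L}"
    then have \<pi>: "\<pi> permutes set L" by simp
    show "permutation_of_list (zip L (map \<pi> L)) = \<pi>"
      by (rule permutation_of_list_zip_unique[OF \<pi> assms(1)])
    show "map \<pi> L \<in> ?D"
      using \<pi> assms by (auto simp: lists_of_len_def permutes_image distinct_map permutes_inj_on)
  qed
  finally show ?thesis .
qed

text \<open>The entries of \<open>Z\<^sup>2\<close> for \<open>Z = \<Sum>\<^sub>a\<^sub>\<in>\<^sub>A z\<^sub>a e\<^sub>a\<close>; \<open>Z\<close> itself has odd entries and is not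
  available in the even part.\<close>

definition rosset_square ::
  "nat \<Rightarrow> (nat \<Rightarrow> nat \<Rightarrow> nat \<Rightarrow> 'a::comm_ring_1) \<Rightarrow> nat set \<Rightarrow> nat \<Rightarrow> nat \<Rightarrow> 'a even_ext"
  where "rosset_square d z A =
    (\<lambda>p q. \<Sum>a\<in>A. \<Sum>b\<in>A. ext_const (fmat_mult d (z a) (z b) p q) * ext_monomial [a, b])"

lemma fmat_power_rosset_square:
  assumes "finite A" "p < d"
  shows "fmat_power d (rosset_square d z A) m p q =
    (\<Sum>w\<in>lists_of_len A (2 * m). ext_const (word_fmat d z w p q) * ext_monomial w)"
  using assms(2)
proof (induction m arbitrary: p)
  case 0
  then show ?case
    by (simp add: fmat_power_def word_fmat_def fmat_one_def ext_monomial_Nil ext_const_one ext_const_zero)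
next
  case (Suc m)
  let ?Z = "rosset_square d z A" and ?W = "lists_of_len A (2 * m)"
  have "fmat_power d ?Z (Suc m) p q = (\<Sum>r<d. ?Z p r * fmat_power d ?Z m r q)"
    by (simp add: fmat_power_def fmat_mult_def)
  also have "\<dots> = (\<Sum>r<d. \<Sum>a\<in>A. \<Sum>b\<in>A. \<Sum>w\<in>?W.
      ext_const (fmat_mult d (z a) (z b) p r * word_fmat d z w r q) * ext_monomial (a # b # w))"
  proof (rule sum.cong[OF refl])
    fix r assume "r \<in> {..<d}"
    then have "?Z p r * fmat_power d ?Z m r q = (\<Sum>a\<in>A. \<Sum>b\<in>A.
        ext_const (fmat_mult d (z a) (z b) p r) * ext_monomial [a, b]) *
        (\<Sum>w\<in>?W. ext_const (word_fmat d z w r q) * ext_monomial w)"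
      using Suc.IH[of r] by (simp add: rosset_square_def)
    also have "\<dots> = (\<Sum>a\<in>A. \<Sum>b\<in>A. \<Sum>w\<in>?W.
        ext_const (fmat_mult d (z a) (z b) p r * word_fmat d z w r q) * ext_monomial (a # b # w))"
      unfolding sum_distrib_right unfolding sum_distrib_left by (intro sum.cong refl) (simp add: ext_const_monomial_mult lists_of_len_def)
    finally show "?Z p r * fmat_power d ?Z m r q = \<dots>" .
  qed
  also have "\<dots> = (\<Sum>a\<in>A. \<Sum>b\<in>A. \<Sum>w\<in>?W. \<Sum>r<d.
      ext_const (fmat_mult d (z a) (z b) p r * word_fmat d z w r q) * ext_monomial (a # b # w))"
    by (simp only: sum.swap[of _ "{..<d}"])
  also have "\<dots> = (\<Sum>a\<in>A. \<Sum>b\<in>A. \<Sum>w\<in>?W. ext_const (word_fmat d z (a # b # w) p q) * ext_monomial (a # b # w))"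
    by (simp add: word_fmat_Cons2 flip: sum_distrib_right ext_const_sum)
  also have "\<dots> = (\<Sum>w\<in>lists_of_len A (Suc (Suc (2 * m))). ext_const (word_fmat d z w p q) * ext_monomial w)"
    using assms(1) by (simp add: sum_lists_of_len_Suc)
  finally show ?case by simp
qed

lemma ext_coeff_fmat_power_rosset_square:
  assumes "finite A" "p < d"
  shows "ext_coeff (fmat_power d (rosset_square d z A) m p q) U =
    (\<Sum>w\<in>lists_of_len A (2 * m). if distinct w \<and> U = set w then word_fmat d z w p q * of_int (list_sign w) else 0)"
  by (auto simp: fmat_power_rosset_square[OF assms] ext_coeff_sum ext_coeff_const_mult
      ext_monomial.rep_eq lists_of_len_def intro!: sum.cong)

lemma fmat_trace_power_rosset_square:
  fixes z :: "nat \<Rightarrow> nat \<Rightarrow> nat \<Rightarrow> 'a::{idom, ring_char_0}"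
  assumes "finite A" "1 \<le> j"
  shows "fmat_trace d (fmat_power d (rosset_square d z A) j) = 0"
proof (rule even_ext_eqI)
  fix U
  let ?W = "lists_of_len A (2 * j)"
  define F where "F w = (if distinct w \<and> U = set w then
    fmat_trace d (word_fmat d z w) * of_int (list_sign w) else (0::'a))" for w
  have "ext_coeff (fmat_trace d (fmat_power d (rosset_square d z A) j)) U =
      (\<Sum>p<d. \<Sum>w\<in>?W. if distinct w \<and> U = set w then word_fmat d z w p p * of_int (list_sign w) else 0)"
    unfolding fmat_trace_def ext_coeff_sum by (simp add: ext_coeff_fmat_power_rosset_square[OF assms(1)])
  also have "\<dots> = (\<Sum>w\<in>?W. \<Sum>p<d.
      if distinct w \<and> U = set w then word_fmat d z w p p * of_int (list_sign w) else 0)"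
    by (rule sum.swap)
  also have "\<dots> = (\<Sum>w\<in>?W. F w)"
  proof (rule sum.cong[OF refl])
    fix w
    show "(\<Sum>p<d. if distinct w \<and> U = set w then word_fmat d z w p p * of_int (list_sign w) else 0) = F w"
    proof (cases "distinct w \<and> U = set w")
      case True
      then show ?thesis by (simp add: F_def fmat_trace_def sum_distrib_right)
    next
      case False
      then show ?thesis by (simp only: F_def if_not_P[OF False] if_False sum.neutral_const)
    qed
  qed
  also have "\<dots> = 0"
  proof -
    have "F (rotate1 w) = - F w" if "w \<in> ?W" for w
    proof -
      have "odd (length w - 1)" using that assms(2) by (simp add: lists_of_len_def)
      then show ?thesis
        by (simp add: F_def fmat_trace_word_fmat_rotate1 list_sign_rotate1)
    qed
    then have "(\<Sum>w\<in>?W. F w) = - (\<Sum>w\<in>?W. F w)"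
      using sum_lists_of_len_rotate1[of F A "2 * j"] by (simp add: sum_negf)
    then show ?thesis by (simp add: eq_neg_iff_add_eq_0 flip: mult_2)
  qed
  finally show "ext_coeff (fmat_trace d (fmat_power d (rosset_square d z A) j)) U = ext_coeff 0 U"
    by simp
qed

lemma amitsur_levitzki_even:
  fixes z :: "nat \<Rightarrow> nat \<Rightarrow> nat \<Rightarrow> 'a::{idom, ring_char_0}"
  assumes "distinct L" "length L = 2 * j" "d \<le> j" "p < d" "q < d"
  shows "(\<Sum>\<pi> | \<pi> permutes set L. of_int (sign \<pi>) * word_fmat d z (map \<pi> L) p q) = 0"
proof -
  let ?Z = "rosset_square d z (set L)"
  have "fmat_power d ?Z d b a = 0" if "a < d" "b < d" for a b
    using fmat_trace_power_rosset_square[where A = "set L" and z = z] even_ext_torsion_free that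
    by (intro fmat_power_eq_0_if_traces_eq_0) auto
  then have "fmat_power d ?Z j p q = 0"
    using assms(3-5) by (rule fmat_power_eq_0_beyond)
  then have "0 = ext_coeff (fmat_power d ?Z j p q) (set L)"
    by simp
  also have "\<dots> = (\<Sum>\<pi> | \<pi> permutes set L. word_fmat d z (map \<pi> L) p q * of_int (list_sign (map \<pi> L)))"
    using sum_distinct_words_eq_sum_permutes[OF assms(1)]
    by (simp add: ext_coeff_fmat_power_rosset_square assms(2,4) eq_commute[of "set L"])
  also have "\<dots> = of_int (list_sign L) * (\<Sum>\<pi> | \<pi> permutes set L. of_int (sign \<pi>) * word_fmat d z (map \<pi> L) p q)"
    using assms(1) by (simp add: sum_distrib_left list_sign_map mult_ac)
  finally show ?thesis by (simp add: list_sign_nonzero)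
qed

lemma amitsur_levitzki:
  fixes z :: "nat \<Rightarrow> nat \<Rightarrow> nat \<Rightarrow> 'a::{idom, ring_char_0}"
  assumes "distinct L" "2 * d \<le> length L" "p < d" "q < d"
  shows "(\<Sum>\<pi> | \<pi> permutes set L. of_int (sign \<pi>) * word_fmat d z (map \<pi> L) p q) = 0"
proof (cases "even (length L)")
  case True
  then show ?thesis using assms by (auto intro: amitsur_levitzki_even elim!: evenE)
next
  case False
  then obtain a L' j where L: "L = a # L'" "length L' = 2 * j"
    by (cases L) (auto elim!: evenE)
  then have L': "distinct L'" "a \<notin> set L'" "d \<le> j" using assms(1,2) by auto
  show ?thesis
  proof (rule alternating_sum_eq_0_by_cosets[where P = "set L'"])
    fix \<tau> assume "\<tau> permutes set L"
    have "word_fmat d z (map (\<tau> \<circ> \<pi>) L) p q = (\<Sum>r<d. z (\<tau> a) p r * word_fmat d (z \<circ> \<tau>) (map \<pi> L') r q)"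
      if "\<pi> permutes set L'" for \<pi>
      using that L'(2) L(1) by (simp add: permutes_not_in word_fmat_Cons fmat_mult_def word_fmat_map o_assoc)
    then have "(\<Sum>\<pi> | \<pi> permutes set L'. of_int (sign \<pi>) * word_fmat d z (map (\<tau> \<circ> \<pi>) L) p q) =
        (\<Sum>r<d. z (\<tau> a) p r *
          (\<Sum>\<pi> | \<pi> permutes set L'. of_int (sign \<pi>) * word_fmat d (z \<circ> \<tau>) (map \<pi> L') r q))"
      by (simp add: sum_distrib_left sum.swap[of _ "{..<d}"] mult_ac)
    also have "\<dots> = 0"
      using amitsur_levitzki_even[OF L'(1) L(2) L'(3) _ assms(4), where z = "z \<circ> \<tau>"]
      by (intro sum.neutral ballI) simp
    finally show "(\<Sum>\<pi> | \<pi> permutes set L'. of_int (sign \<pi>) * word_fmat d z (map (\<tau> \<circ> \<pi>) L) p q) = 0" .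
  qed (use L in auto)
qed

section \<open>Traces of \<open>\<sigma> \<circ> ST(\<lambda>)\<close>\<close>

lemma ttrace_perm_op_mult:
  assumes \<sigma>: "\<sigma> permutes {0..<n}"
  shows "ttrace d n (tmult d n (perm_op n \<sigma>) M) = (\<Sum>i\<in>tidx d n. M (restrict (i \<circ> \<sigma>) {0..<n}) i)"
proof -
  have "(\<Sum>i'\<in>tidx d n. perm_op n \<sigma> i i' * M i' i) = M (restrict (i \<circ> \<sigma>) {0..<n}) i"
    if i: "i \<in> tidx d n" for i
  proof -
    let ?r = "restrict (i \<circ> \<sigma>) {0..<n}"
    have inv: "\<sigma> (inv_into UNIV \<sigma> j) = j" "inv_into UNIV \<sigma> (\<sigma> j) = j" for j
      using permutes_surj[OF \<sigma>] permutes_inj[OF \<sigma>] by (simp_all add: f_inv_into_f inv_into_f_f)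
    have iff: "(\<forall>j<n. i j = i' (inv_into UNIV \<sigma> j)) \<longleftrightarrow> i' = ?r" if "i' \<in> tidx d n" for i'
    proof
      assume "\<forall>j<n. i j = i' (inv_into UNIV \<sigma> j)"
      then show "i' = ?r"
        using that permutes_in_image[OF \<sigma>] inv(2) by (auto simp: tidx_def PiE_iff extensional_def)
    next
      assume "i' = ?r"
      then show "\<forall>j<n. i j = i' (inv_into UNIV \<sigma> j)"
        using permutes_in_image[OF permutes_inv[OF \<sigma>]] inv(1) by (auto simp: permutes_inv_eq[OF \<sigma>])
    qed
    have "(\<Sum>i'\<in>tidx d n. perm_op n \<sigma> i i' * M i' i) = (\<Sum>i'\<in>tidx d n. if i' = ?r then M i' i else 0)"
      by (intro sum.cong refl) (simp add: perm_op_def iff)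
    moreover have "?r \<in> tidx d n"
      using i permutes_in_image[OF \<sigma>] by (auto simp: tidx_def PiE_iff)
    ultimately show ?thesis
      by (simp add: sum.delta' tidx_def finite_PiE)
  qed
  then show ?thesis by (simp add: ttrace_def tmult_def)
qed

definition fmat_of_mat :: "'a mat \<Rightarrow> nat \<Rightarrow> nat \<Rightarrow> 'a"
  where "fmat_of_mat A = (\<lambda>p q. A $$ (p, q))"

lemma ttrace_perm_op_ST:
  assumes "\<sigma> permutes {0..<length h}"
  shows "ttrace d (length h) (tmult d (length h) (perm_op (length h) \<sigma>) (ST d h x)) =
    (\<Sum>\<tau> | \<tau> permutes {0..<sum_list h}. of_int (sign \<tau>) *
      perm_trace d {0..<length h} \<sigma> (\<lambda>j. fmat_of_mat (block_prod d h (\<lambda>m. x (\<tau> m)) j)))"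
proof -
  have "tensor_op (length h) As (restrict (i \<circ> \<sigma>) {0..<length h}) i =
      (\<Prod>j\<in>{0..<length h}. fmat_of_mat (As j) (i (\<sigma> j)) (i j))"
    for As :: "nat \<Rightarrow> 'a mat" and i
    unfolding tensor_op_def fmat_of_mat_def atLeast0LessThan by (intro prod.cong) auto
  then show ?thesis
    unfolding ttrace_perm_op_mult[OF assms] ST_def perm_trace_def tidx_def sum_distrib_left
    by (subst sum.swap) (simp add: atLeast0LessThan)
qed

lemma mat_prod_list_carrier: "set As \<subseteq> carrier_mat d d \<Longrightarrow> mat_prod_list d As \<in> carrier_mat d d"
  by (induction As) (auto simp: mat_prod_list_def)

lemma fmat_of_mat_prod_list:
  assumes "set As \<subseteq> carrier_mat d d" "p < d" "q < d"
  shows "fmat_of_mat (mat_prod_list d As) p q = fmat_prod d (map fmat_of_mat As) p q"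
  using assms
proof (induction As arbitrary: p)
  case Nil
  then show ?case by (simp add: mat_prod_list_def fmat_of_mat_def fmat_one_def)
next
  case (Cons A As)
  have carrier: "A \<in> carrier_mat d d" "mat_prod_list d As \<in> carrier_mat d d"
    using Cons.prems(1) mat_prod_list_carrier[of As d] by auto
  have "fmat_of_mat (mat_prod_list d (A # As)) p q = (A * mat_prod_list d As) $$ (p, q)"
    by (simp add: mat_prod_list_def fmat_of_mat_def)
  also have "\<dots> = (\<Sum>r<d. A $$ (p, r) * mat_prod_list d As $$ (r, q))"
    using carrier Cons.prems(2,3) by (simp add: scalar_prod_def atLeast0LessThan)
  also have "\<dots> = fmat_prod d (map fmat_of_mat (A # As)) p q"
    using Cons by (simp add: fmat_mult_def fmat_of_mat_def[abs_def])
  finally show ?case .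
qed

definition block :: "nat list \<Rightarrow> nat \<Rightarrow> nat list"
  where "block h j = [block_start h j..<block_start h j + h ! j]"

lemma block_prod_eq: "block_prod d h y j = mat_prod_list d (map y (block h j))"
proof -
  have "map (\<lambda>t. block_start h j + t) [0..<h ! j] = block h j"
    using map_add_upt[of "block_start h j" "h ! j"] by (simp add: block_def add.commute)
  note upt_block = this
  show ?thesis unfolding block_prod_def upt_block[symmetric] by (simp add: comp_def)
qed

lemma block_start_Suc: "j < length h \<Longrightarrow> block_start h (Suc j) = block_start h j + h ! j"
  unfolding block_start_def by (simp add: take_Suc_conv_app_nth)

lemma block_start_mono: "i \<le> j \<Longrightarrow> block_start h i \<le> block_start h j"
  unfolding block_start_def by (metis le_add1 le_add_diff_inverse sum_list_append take_add)

lemma set_block_subset: "j < length h \<Longrightarrow> set (block h j) \<subseteq> {0..<sum_list h}"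
  using block_start_Suc[of j h] block_start_mono[of "Suc j" "length h" h]
  by (auto simp: block_def block_start_def)

lemma block_disjoint:
  assumes "i < length h" "j < length h" "i \<noteq> j"
  shows "set (block h i) \<inter> set (block h j) = {}"
proof -
  have ordered: "set (block h a) \<inter> set (block h b) = {}" if "a < b" "b < length h" for a b
    using that block_start_Suc[of a h] block_start_mono[of "Suc a" b h] by (auto simp: block_def)
  show ?thesis
  proof (cases "i < j")
    case True
    then show ?thesis using ordered assms(2) by blast
  next
    case False
    then have "j < i" using assms(3) by simp
    then show ?thesis using ordered[OF _ assms(1)] by blast
  qed
qed

lemma fmat_of_mat_block_prod:
  assumes "\<And>m. m \<in> set (block h j) \<Longrightarrow> y m \<in> carrier_mat d d" "p < d" "q < d"
  shows "fmat_of_mat (block_prod d h y j) p q = word_fmat d (fmat_of_mat \<circ> y) (block h j) p q"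
proof -
  have "set (map y (block h j)) \<subseteq> carrier_mat d d" using assms(1) by auto
  then show ?thesis using assms(2,3) by (simp add: block_prod_eq word_fmat_def fmat_of_mat_prod_list)
qed

lemma distinct_concat_map:
  assumes "distinct S" "\<And>j. j \<in> set S \<Longrightarrow> distinct (f j)"
    and "\<And>i j. i \<in> set S \<Longrightarrow> j \<in> set S \<Longrightarrow> i \<noteq> j \<Longrightarrow> set (f i) \<inter> set (f j) = {}"
  shows "distinct (concat (map f S))"
  using assms
proof (induction S)
  case (Cons a S)
  have "distinct (concat (map f S))" by (rule Cons.IH) (use Cons.prems in auto)
  moreover have "set (f a) \<inter> set (f b) = {}" if "b \<in> set S" for b
    using Cons.prems(3)[of a b] Cons.prems(1) that by auto
  then have "set (f a) \<inter> set (concat (map f S)) = {}" by auto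
  ultimately show ?case using Cons.prems by simp
qed simp

text \<open>The indices of the factors \<open>x\<^sub>m\<close> met along the cycle of \<open>\<sigma>\<close> through \<open>j\<close>, in the order in which
  \<open>perm_trace_isolate_cycle\<close> multiplies them.\<close>

definition cycle_word :: "nat list \<Rightarrow> (nat \<Rightarrow> nat) \<Rightarrow> nat \<Rightarrow> nat list"
  where "cycle_word h \<sigma> j = concat (map (block h) (rev (support \<sigma> j)))"

lemma
  assumes "\<sigma> permutes {0..<length h}" "j < length h"
  shows distinct_cycle_word: "distinct (cycle_word h \<sigma> j)"
    and set_cycle_word: "set (cycle_word h \<sigma> j) = (\<Union>i\<in>cycle_of \<sigma> j. set (block h i))"
    and length_cycle_word: "length (cycle_word h \<sigma> j) = (\<Sum>i\<in>cycle_of \<sigma> j. h ! i)"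
    and set_cycle_word_subset: "set (cycle_word h \<sigma> j) \<subseteq> {0..<sum_list h}"
proof -
  have perm: "permutation \<sigma>" using assms(1) permutation_permutes by blast
  let ?S = "support \<sigma> j"
  have S: "distinct ?S" "set ?S = cycle_of \<sigma> j"
    using cycle_of_permutation[OF perm] cycle_of_eq_set_support[OF perm] by simp_all
  have sub: "i < length h" if "i \<in> cycle_of \<sigma> j" for i
    using that cycle_of_subset[OF assms(1), of j] assms(2) by auto
  show "distinct (cycle_word h \<sigma> j)"
    unfolding cycle_word_def
  proof (rule distinct_concat_map)
    show "set (block h i) \<inter> set (block h i') = {}" if "i \<in> set (rev ?S)" "i' \<in> set (rev ?S)" "i \<noteq> i'"
      for i i'
      using that S(2) sub by (intro block_disjoint) auto
  qed (use S in \<open>simp_all add: block_def\<close>)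
  show set: "set (cycle_word h \<sigma> j) = (\<Union>i\<in>cycle_of \<sigma> j. set (block h i))"
    unfolding cycle_word_def using S(2) by simp
  show "set (cycle_word h \<sigma> j) \<subseteq> {0..<sum_list h}"
    unfolding set using sub set_block_subset by blast
  have "length (cycle_word h \<sigma> j) = sum_list (map (\<lambda>i. h ! i) ?S)"
    by (simp add: cycle_word_def length_concat block_def comp_def rev_map[symmetric])
  also have "\<dots> = (\<Sum>i\<in>cycle_of \<sigma> j. h ! i)"
    using sum.distinct_set_conv_list[OF S(1), of "\<lambda>i. h ! i"] S(2) by simp
  finally show "length (cycle_word h \<sigma> j) = (\<Sum>i\<in>cycle_of \<sigma> j. h ! i)" .
qed

lemma perm_trace_block_prod_isolate_cycle:
  assumes \<sigma>: "\<sigma> permutes {0..<length h}" "j < length h"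
    and y: "\<And>m. m < sum_list h \<Longrightarrow> y m \<in> carrier_mat d d"
  shows "perm_trace d {0..<length h} \<sigma> (\<lambda>i. fmat_of_mat (block_prod d h y i)) =
    perm_trace d ({0..<length h} - cycle_of \<sigma> j) \<sigma> (\<lambda>i. fmat_of_mat (block_prod d h y i)) *
    fmat_trace d (word_fmat d (fmat_of_mat \<circ> y) (cycle_word h \<sigma> j))"
proof -
  let ?A = "\<lambda>i. fmat_of_mat (block_prod d h y i)" and ?S = "rev (support \<sigma> j)"
  have "permutation \<sigma>" using \<sigma>(1) permutation_permutes by blast
  then have "set ?S \<subseteq> {..<length h}"
    using cycle_of_subset[OF \<sigma>(1), of j] \<sigma>(2) cycle_of_eq_set_support[of \<sigma> j] by auto
  have blocks: "?A i p q = word_fmat d (fmat_of_mat \<circ> y) (block h i) p q"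
    if "i \<in> set ?S" "p < d" "q < d" for i p q
  proof (rule fmat_of_mat_block_prod[OF _ that(2,3)])
    fix m assume "m \<in> set (block h i)"
    moreover have "i \<in> {..<length h}" using that(1) \<open>set ?S \<subseteq> _\<close> by blast
    ultimately have "m < sum_list h" using set_block_subset[of i h] by auto
    then show "y m \<in> carrier_mat d d" by (rule y)
  qed
  have "fmat_prod d (map ?A ?S) p p = fmat_prod d (map (\<lambda>i. word_fmat d (fmat_of_mat \<circ> y) (block h i)) ?S) p p"
    if "p < d" for p
    using that blocks by (intro fmat_prod_cong) (auto simp: list.rel_map list_all2_same)
  then have "fmat_trace d (fmat_prod d (map ?A ?S)) = fmat_trace d (word_fmat d (fmat_of_mat \<circ> y) (cycle_word h \<sigma> j))"
    unfolding fmat_trace_def cycle_word_def by (simp add: fmat_prod_map_word_fmat)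
  then show ?thesis
    using perm_trace_isolate_cycle[OF \<sigma>(1) finite_atLeastLessThan, of j d ?A] \<sigma>(2)
    by (simp add: rev_map)
qed

lemma perm_trace_outside_cycle_compose:
  assumes "\<sigma> permutes {0..<length h}" "j < length h" "\<pi> permutes set (cycle_word h \<sigma> j)"
  shows "perm_trace d ({0..<length h} - cycle_of \<sigma> j) \<sigma> (\<lambda>i. fmat_of_mat (block_prod d h (y \<circ> \<pi>) i)) =
    perm_trace d ({0..<length h} - cycle_of \<sigma> j) \<sigma> (\<lambda>i. fmat_of_mat (block_prod d h y i))"
proof -
  have "block_prod d h (y \<circ> \<pi>) i = block_prod d h y i" if i: "i \<in> {0..<length h} - cycle_of \<sigma> j" for i
  proof -
    have "\<pi> m = m" if "m \<in> set (block h i)" for m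
    proof -
      have "m \<notin> set (block h i')" if "i' \<in> cycle_of \<sigma> j" for i'
      proof -
        have "i < length h" "i' < length h" "i \<noteq> i'"
          using i that cycle_of_subset[OF assms(1), of j] assms(2) by auto
        then show ?thesis using block_disjoint[of i h i'] \<open>m \<in> set (block h i)\<close> by auto
      qed
      then show ?thesis
        using assms(3) set_cycle_word[OF assms(1,2)] by (auto intro!: permutes_not_in)
    qed
    then show ?thesis by (simp add: block_prod_eq comp_def cong: map_cong)
  qed
  then show ?thesis unfolding perm_trace_def by (intro sum.cong prod.cong refl) auto
qed

lemma alternating_sum_trace_word_eq_0:
  fixes z :: "nat \<Rightarrow> nat \<Rightarrow> nat \<Rightarrow> 'a::{idom, ring_char_0}"
  assumes "finite K" "set L \<subseteq> K" "distinct L" "2 * d \<le> length L"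
    and F: "\<And>\<tau> \<pi>. \<pi> permutes set L \<Longrightarrow> F (\<tau> \<circ> \<pi>) = F \<tau>"
  shows "(\<Sum>\<tau> | \<tau> permutes K. of_int (sign \<tau>) * (F \<tau> * fmat_trace d (word_fmat d (z \<circ> \<tau>) L))) = 0"
proof (rule alternating_sum_eq_0_by_cosets[OF assms(1,2)])
  fix \<tau>
  have "(\<Sum>\<pi> | \<pi> permutes set L. of_int (sign \<pi>) * (F (\<tau> \<circ> \<pi>) * fmat_trace d (word_fmat d (z \<circ> (\<tau> \<circ> \<pi>)) L))) =
      (\<Sum>\<pi> | \<pi> permutes set L. \<Sum>p<d. F \<tau> * (of_int (sign \<pi>) * word_fmat d (z \<circ> \<tau>) (map \<pi> L) p p))"
    using F by (intro sum.cong refl) (simp add: fmat_trace_def word_fmat_map o_assoc sum_distrib_left mult_ac)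
  also have "\<dots> = (\<Sum>p<d. F \<tau> * (\<Sum>\<pi> | \<pi> permutes set L. of_int (sign \<pi>) * word_fmat d (z \<circ> \<tau>) (map \<pi> L) p p))"
    by (subst sum.swap) (simp add: sum_distrib_left)
  also have "\<dots> = 0"
    by (intro sum.neutral ballI) (simp add: amitsur_levitzki[OF assms(3,4)])
  finally show "(\<Sum>\<pi> | \<pi> permutes set L. of_int (sign \<pi>) *
      (F (\<tau> \<circ> \<pi>) * fmat_trace d (word_fmat d (z \<circ> (\<tau> \<circ> \<pi>)) L))) = 0" .
qed

lemma ttrace_perm_op_ST_isolate_cycle:
  assumes \<sigma>: "\<sigma> permutes {0..<length h}" "j < length h"
    and x: "\<And>m. m < sum_list h \<Longrightarrow> x m \<in> carrier_mat d d"
  shows "ttrace d (length h) (tmult d (length h) (perm_op (length h) \<sigma>) (ST d h x)) =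
    (\<Sum>\<tau> | \<tau> permutes {0..<sum_list h}. of_int (sign \<tau>) *
      (perm_trace d ({0..<length h} - cycle_of \<sigma> j) \<sigma> (\<lambda>i. fmat_of_mat (block_prod d h (\<lambda>m. x (\<tau> m)) i)) *
       fmat_trace d (word_fmat d ((fmat_of_mat \<circ> x) \<circ> \<tau>) (cycle_word h \<sigma> j))))"
  unfolding ttrace_perm_op_ST[OF \<sigma>(1)]
proof (rule sum.cong[OF refl])
  fix \<tau> assume "\<tau> \<in> {\<tau>. \<tau> permutes {0..<sum_list h}}"
  then have "x (\<tau> m) \<in> carrier_mat d d" if "m < sum_list h" for m
    using x that permutes_in_image by fastforce
  then show "of_int (sign \<tau>) * perm_trace d {0..<length h} \<sigma> (\<lambda>i. fmat_of_mat (block_prod d h (\<lambda>m. x (\<tau> m)) i)) =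
      of_int (sign \<tau>) * (perm_trace d ({0..<length h} - cycle_of \<sigma> j) \<sigma>
        (\<lambda>i. fmat_of_mat (block_prod d h (\<lambda>m. x (\<tau> m)) i)) *
      fmat_trace d (word_fmat d ((fmat_of_mat \<circ> x) \<circ> \<tau>) (cycle_word h \<sigma> j)))"
    using perm_trace_block_prod_isolate_cycle[OF \<sigma>, of "\<lambda>m. x (\<tau> m)"] by (simp add: comp_def)
qed

lemma exists_big_cycle:
  assumes "\<sigma> permutes {0..<length h}" "h \<noteq> []"
  shows "\<exists>j<length h. Max (set_mset (sigma_partition \<sigma> h)) = (\<Sum>i\<in>cycle_of \<sigma> j. h ! i)"
proof -
  let ?f = "\<lambda>c. \<Sum>i\<in>c. h ! i" and ?C = "perm_cycles (length h) \<sigma>"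
  have "finite ?C" "?C \<noteq> {}" using assms(2) by (simp_all add: perm_cycles_def)
  then have "Max (?f ` ?C) \<in> ?f ` ?C" by (intro Max_in) auto
  moreover have "set_mset (sigma_partition \<sigma> h) = ?f ` ?C"
    using \<open>finite ?C\<close> by (simp add: sigma_partition_def)
  ultimately show ?thesis by (auto simp: perm_cycles_def)
qed

theorem mainTheorem6:
  fixes h :: "nat list" and k d :: nat and \<sigma> :: "nat \<Rightarrow> nat"
    and x :: "nat \<Rightarrow> 'a::field_char_0 mat"
  assumes "d \<ge> 1"
    and "is_partition h k" and "h \<noteq> []"
    and "\<sigma> permutes {0..<length h}"
    and "Max (set_mset (sigma_partition \<sigma> h)) \<ge> 2 * d"
    and "\<And>m. m < k \<Longrightarrow> x m \<in> carrier_mat d d"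
  shows "ttrace d (length h) (tmult d (length h) (perm_op (length h) \<sigma>) (ST d h x)) = 0"
proof -
  have k: "sum_list h = k" using assms(2) by (simp add: is_partition_def)
  obtain j where j: "j < length h" "2 * d \<le> (\<Sum>i\<in>cycle_of \<sigma> j. h ! i)"
    using exists_big_cycle[OF assms(4,3)] assms(5) by auto
  let ?L = "cycle_word h \<sigma> j"
  let ?F = "\<lambda>\<tau>. perm_trace d ({0..<length h} - cycle_of \<sigma> j) \<sigma>
    (\<lambda>i. fmat_of_mat (block_prod d h (\<lambda>m. x (\<tau> m)) i))"
  have "ttrace d (length h) (tmult d (length h) (perm_op (length h) \<sigma>) (ST d h x)) =
      (\<Sum>\<tau> | \<tau> permutes {0..<k}. of_int (sign \<tau>) * (?F \<tau> * fmat_trace d (word_fmat d ((fmat_of_mat \<circ> x) \<circ> \<tau>) ?L)))"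
    using ttrace_perm_op_ST_isolate_cycle[OF assms(4) j(1), where x = x and d = d] assms(6) k by simp
  also have "\<dots> = 0"
  proof (rule alternating_sum_trace_word_eq_0)
    show "set ?L \<subseteq> {0..<k}" "distinct ?L" "2 * d \<le> length ?L"
      using set_cycle_word_subset[OF assms(4) j(1)] distinct_cycle_word[OF assms(4) j(1)]
        length_cycle_word[OF assms(4) j(1)] j(2) k by simp_all
    show "?F (\<tau> \<circ> \<pi>) = ?F \<tau>" if "\<pi> permutes set ?L" for \<tau> \<pi>
      using perm_trace_outside_cycle_compose[OF assms(4) j(1) that, of d "\<lambda>m. x (\<tau> m)"]
      by (simp add: comp_def)
  qed simp
  finally show ?thesis .
qed

end
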